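(* Let $N$ be a Niemeier lattice with roots, $N^{-}$ the lattice $N$ with negated form $\langle\ ,\ \rangle^{-}_N$, $R$ the set of $(-2)$-vectors of $N^{-}$, and $\Theta=\Theta_1\sqcup\dots\sqcup\Theta_K$ a simple root system of $\langle R\rangle$ decomposed into its connected components. Put $A_i=\langle\Theta_i\rangle^\vee/\langle\Theta_i\rangle$, and regard $N^{-}/\langle R\rangle\subset A_1\times\dots\times A_K$ via $N^{-}\subset\langle R\rangle^\vee=\langle\Theta_1\rangle^\vee\oplus\dots\oplus\langle\Theta_K\rangle^\vee$. For a codeword $\gamma\in N^{-}/\langle R\rangle$ with components $\gamma_i\in A_i$, let $\tilde\gamma_i\in\langle\Theta_i\rangle^\vee$ be the canonical representative of $\gamma_i$ and put $v_\gamma=\tilde\gamma_1+\dots+\tilde\gamma_K\in\langle R\rangle^\vee$. Then $v_\gamma\in N^{-}$.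
   Context: A Niemeier lattice is an even unimodular positive-definite lattice of rank $24$; "with roots" means it has vectors of norm $2$. A simple root system of $\langle R\rangle$ is a subset $\Theta\subset R$ forming a $\mathbb{Z}$-basis of $\langle R\rangle$ whose dual graph (edge between $r\ne r'$ iff $\langle r,r'\rangle^{-}_N=1$; distinct elements have $\langle r,r'\rangle^-_N\in\{0,1\}$) is a disjoint union of ordinary $ADE$ Dynkin diagrams; $\Theta_i$ are the vertex sets of its connected components. For $M$ a lattice, $M^\vee=\{x\in M\otimes\mathbb{Q}:\langle x,v\rangle\in\mathbb{Z}\ \forall v\in M\}$. Canonical representative: let $\Sigma=\{r_1,\dots,r_k\}$ be a connected simple root system (e.g. some $\Theta_i$), let $\mu=\sum_j m(r_j)r_j$ be the highest root of $\langle\Sigma\rangle$ with respect to $\Sigma$ (coefficients $m(r_j)$ positive integers), let $J(\Sigma)=\{j:m(r_j)=1\}$, and let $r_1^\vee,\dots,r_k^\vee$ be the basis of $\langle\Sigma\rangle^\vee$ dual to $r_1,\dots,r_k$. The map $j\mapsto r_j^\vee\bmod\langle\Sigma\rangle$ is a bijection from $J(\Sigma)$ onto the nonzero elements of $\langle\Sigma\rangle^\vee/\langle\Sigma\rangle$. The canonical representative of $\alpha\in\langle\Sigma\rangle^\vee/\langle\Sigma\rangle$ is $0$ if $\alpha=0$, and $r_j^\vee$ for the unique $j\in J(\Sigma)$ with $r_j^\vee\equiv\alpha$ otherwise. *)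

theory Defs
  imports "HOL-Analysis.Analysis"
begin

type_synonym vec = "real^24"

text \<open>The lattice N is realised as a subset of Euclidean space real^24 with the standard
dot product (its positive-definite form); N^- is the same set with the negated form.\<close>

definition negform :: "vec \<Rightarrow> vec \<Rightarrow> real" where
  "negform x y = - (x \<bullet> y)"

definition zspan :: "vec set \<Rightarrow> vec set" where
  "zspan M = {(\<Sum>v\<in>F. of_int (c v) *\<^sub>R v) | F c. finite F \<and> F \<subseteq> M}"

definition qspan :: "vec set \<Rightarrow> vec set" where
  "qspan M = {(\<Sum>v\<in>F. c v *\<^sub>R v) | F c. finite F \<and> F \<subseteq> M \<and> (\<forall>v\<in>F. c v \<in> \<rat>)}"

definition dual_lattice :: "vec set \<Rightarrow> vec set" where
  "dual_lattice M = {x \<in> qspan M. \<forall>v\<in>M. negform x v \<in> \<int>}"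

definition z_indep :: "vec set \<Rightarrow> bool" where
  "z_indep S \<longleftrightarrow> (\<forall>F c. finite F \<and> F \<subseteq> S \<and> (\<Sum>v\<in>F. of_int (c v) *\<^sub>R v) = (0::vec)
                     \<longrightarrow> (\<forall>v\<in>F. c v = (0::int)))"

definition niemeier :: "vec set \<Rightarrow> bool" where
  "niemeier N \<longleftrightarrow> (\<exists>b :: 24 \<Rightarrow> vec.
      N = zspan (range b) \<and> inj b \<and> independent (range b) \<and>
      (\<forall>x\<in>N. \<forall>y\<in>N. x \<bullet> y \<in> \<int>) \<and>
      (\<forall>x\<in>N. \<exists>k::int. x \<bullet> x = 2 * of_int k) \<and>
      (det (\<chi> i j. b i \<bullet> b j) = 1 \<or> det (\<chi> i j. b i \<bullet> b j) = -1))"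

definition has_roots :: "vec set \<Rightarrow> bool" where
  "has_roots N \<longleftrightarrow> (\<exists>x\<in>N. x \<bullet> x = 2)"

definition lroots :: "vec set \<Rightarrow> vec set" where
  "lroots L = {x \<in> L. negform x x = -2}"

definition dual_edge :: "vec \<Rightarrow> vec \<Rightarrow> bool" where
  "dual_edge u v \<longleftrightarrow> u \<noteq> v \<and> negform u v = 1"

definition comps :: "vec set \<Rightarrow> vec set set" where
  "comps Th = (\<lambda>r. {s \<in> Th. (\<lambda>u v. u \<in> Th \<and> v \<in> Th \<and> dual_edge u v)\<^sup>*\<^sup>* r s}) ` Th"

definition adjA :: "nat \<Rightarrow> nat \<Rightarrow> bool" where
  "adjA i j \<longleftrightarrow> j = i + 1 \<or> i = j + 1"

definition adjD :: "nat \<Rightarrow> nat \<Rightarrow> nat \<Rightarrow> bool" where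
  "adjD n i j \<longleftrightarrow> (i < n - 1 \<and> j < n - 1 \<and> adjA i j)
      \<or> (i = n - 3 \<and> j = n - 1) \<or> (i = n - 1 \<and> j = n - 3)"

definition adjE :: "nat \<Rightarrow> nat \<Rightarrow> nat \<Rightarrow> bool" where
  "adjE n i j \<longleftrightarrow> (i < n - 1 \<and> j < n - 1 \<and> adjA i j)
      \<or> (i = 2 \<and> j = n - 1) \<or> (i = n - 1 \<and> j = 2)"

definition is_ADE :: "vec set \<Rightarrow> (vec \<Rightarrow> vec \<Rightarrow> bool) \<Rightarrow> bool" where
  "is_ADE V E \<longleftrightarrow> (\<exists>f n. bij_betw f V {..<n} \<and>
     ((n \<ge> 1 \<and> (\<forall>u\<in>V. \<forall>v\<in>V. E u v \<longleftrightarrow> adjA (f u) (f v))) \<or>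
      (n \<ge> 4 \<and> (\<forall>u\<in>V. \<forall>v\<in>V. E u v \<longleftrightarrow> adjD n (f u) (f v))) \<or>
      (n \<in> {6,7,8} \<and> (\<forall>u\<in>V. \<forall>v\<in>V. E u v \<longleftrightarrow> adjE n (f u) (f v)))))"

definition simple_root_system :: "vec set \<Rightarrow> vec set \<Rightarrow> bool" where
  "simple_root_system R Th \<longleftrightarrow>
     finite Th \<and> Th \<subseteq> R \<and> zspan Th = zspan R \<and> z_indep Th \<and>
     (\<forall>r\<in>Th. \<forall>r'\<in>Th. r \<noteq> r' \<longrightarrow> negform r r' \<in> {0, 1}) \<and>
     (\<forall>C\<in>comps Th. is_ADE C dual_edge)"

definition zcoord :: "vec set \<Rightarrow> vec \<Rightarrow> vec \<Rightarrow> int" where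
  "zcoord S v = (THE c. (\<forall>r. r \<notin> S \<longrightarrow> c r = 0) \<and> v = (\<Sum>r\<in>S. of_int (c r) *\<^sub>R r))"

definition highest_root :: "vec set \<Rightarrow> vec" where
  "highest_root S = (THE \<mu>. \<mu> \<in> lroots (zspan S) \<and>
      (\<forall>\<alpha>\<in>lroots (zspan S). \<forall>r\<in>S. zcoord S \<alpha> r \<le> zcoord S \<mu> r))"

definition Jset :: "vec set \<Rightarrow> vec set" where
  "Jset S = {r \<in> S. zcoord S (highest_root S) r = 1}"

definition dualb :: "vec set \<Rightarrow> vec \<Rightarrow> vec" where
  "dualb S r = (THE w. w \<in> dual_lattice (zspan S) \<and>
      (\<forall>r'\<in>S. negform w r' = (if r' = r then 1 else 0)))"

text \<open>Class of y in <S>^vee / <S> as a coset.\<close>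
definition cls :: "vec set \<Rightarrow> vec \<Rightarrow> vec set" where
  "cls S y = (\<lambda>z. y + z) ` zspan S"

definition canon_rep :: "vec set \<Rightarrow> vec set \<Rightarrow> vec" where
  "canon_rep S \<alpha> = (if \<alpha> = zspan S then 0
      else (THE w. \<exists>r\<in>Jset S. w = dualb S r \<and> w \<in> \<alpha>))"

end

theory Submission
  imports Defs
begin

text \<open>
  Since the canonical representative of the class of \<open>d C\<close> differs from \<open>d C\<close> by an element
  of \<open>\<langle>C\<rangle> \<subseteq> \<langle>\<Theta>\<rangle> = \<langle>R\<rangle> \<subseteq> N\<close>, the sum of the representatives differs from \<open>x \<in> N\<close> by an
  element of \<open>N\<close>. The content is that the representative really lies in its class, i.e. that
  \<open>j \<mapsto> r\<^sub>j\<^sup>\<or>\<close> hits every nonzero class of \<open>\<langle>C\<rangle>\<^sup>\<or>/\<langle>C\<rangle>\<close> exactly once. This is checked type by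
  type in coordinates: \<open>y \<in> \<langle>C\<rangle>\<^sup>\<or>\<close> has rational coefficients \<open>q\<close> with integral image under the
  Cartan matrix. For \<open>A\<^sub>n\<close>, \<open>E\<^sub>6\<close>, \<open>E\<^sub>7\<close>, \<open>E\<^sub>8\<close> the inverse Cartan matrix is congruent to a rank
  one matrix \<open>e u\<^sub>i u\<^sub>j / N\<close> modulo \<open>\<int>\<close>, so the class of \<open>q\<close> is determined by one residue
  modulo \<open>N\<close>; for \<open>D\<^sub>n\<close> it is determined by the coefficients at the three end nodes, and a
  computation modulo 4 finishes. The highest root is identified by bounding the coefficients of
  all roots: as a sum of squared differences along the chain for \<open>A\<close> and \<open>D\<close>, and by
  Cauchy--Schwarz against the fundamental coweights for \<open>E\<^sub>6\<close> and \<open>E\<^sub>7\<close>.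
\<close>

section \<open>Integer spans\<close>

lemma mem_zspan_iff:
  "x \<in> zspan M \<longleftrightarrow> (\<exists>F c. finite F \<and> F \<subseteq> M \<and> x = (\<Sum>v\<in>F. of_int (c v) *\<^sub>R v))"
  unfolding zspan_def by auto

lemma zspanE:
  assumes "x \<in> zspan M"
  obtains F c where "finite F" "F \<subseteq> M" "x = (\<Sum>v\<in>F. of_int (c v) *\<^sub>R v)"
  using assms unfolding mem_zspan_iff by auto

lemma zspan_zero: "0 \<in> zspan M"
  unfolding mem_zspan_iff by (rule exI[of _ "{}"]) auto

lemma zspan_superset: "v \<in> M \<Longrightarrow> v \<in> zspan M"
  unfolding mem_zspan_iff by (rule exI[of _ "{v}"], rule exI[of _ "\<lambda>_. 1"]) auto

lemma zspan_add:
  assumes "x \<in> zspan M" "y \<in> zspan M"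
  shows "x + y \<in> zspan M"
proof -
  obtain F c where F: "finite F" "F \<subseteq> M" "x = (\<Sum>v\<in>F. of_int (c v) *\<^sub>R v)"
    using assms(1) by (rule zspanE)
  obtain G d where G: "finite G" "G \<subseteq> M" "y = (\<Sum>v\<in>G. of_int (d v) *\<^sub>R v)"
    using assms(2) by (rule zspanE)
  define e where "e v = (if v \<in> F then c v else 0) + (if v \<in> G then d v else 0)" for v
  have "(\<Sum>v\<in>F \<union> G. of_int (if v \<in> F then c v else 0) *\<^sub>R v) = (\<Sum>v\<in>F. of_int (c v) *\<^sub>R v)"
    "(\<Sum>v\<in>F \<union> G. of_int (if v \<in> G then d v else 0) *\<^sub>R v) = (\<Sum>v\<in>G. of_int (d v) *\<^sub>R v)"
    using F G by (intro sum.mono_neutral_cong_right; auto)+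
  then have "x + y = (\<Sum>v\<in>F \<union> G. of_int (e v) *\<^sub>R v)"
    unfolding e_def of_int_add scaleR_add_left sum.distrib F(3) G(3) by simp
  then show ?thesis
    unfolding mem_zspan_iff using F G by (intro exI[of _ "F \<union> G"] exI[of _ e]) simp
qed

lemma zspan_scaleR_of_int:
  assumes "x \<in> zspan M"
  shows "of_int k *\<^sub>R x \<in> zspan M"
proof -
  obtain F c where F: "finite F" "F \<subseteq> M" "x = (\<Sum>v\<in>F. of_int (c v) *\<^sub>R v)"
    using assms by (rule zspanE)
  have "of_int k *\<^sub>R x = (\<Sum>v\<in>F. of_int (k * c v) *\<^sub>R v)"
    using F by (simp add: scaleR_sum_right)
  then show ?thesis
    unfolding mem_zspan_iff using F by (intro exI[of _ F] exI[of _ "\<lambda>v. k * c v"]) simp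
qed

lemma zspan_uminus: "x \<in> zspan M \<Longrightarrow> - x \<in> zspan M"
  using zspan_scaleR_of_int[of x M "-1"] by simp

lemma zspan_diff: "x \<in> zspan M \<Longrightarrow> y \<in> zspan M \<Longrightarrow> x - y \<in> zspan M"
  using zspan_add[of x M "-y"] zspan_uminus by simp

lemma zspan_sum: "finite I \<Longrightarrow> (\<And>i. i \<in> I \<Longrightarrow> f i \<in> zspan M) \<Longrightarrow> sum f I \<in> zspan M"
  by (induction I rule: finite_induct) (auto intro: zspan_zero zspan_add)

lemma zspan_subset_zspan:
  assumes "M \<subseteq> zspan X"
  shows "zspan M \<subseteq> zspan X"
proof
  fix x assume "x \<in> zspan M"
  then obtain F c where F: "finite F" "F \<subseteq> M" "x = (\<Sum>v\<in>F. of_int (c v) *\<^sub>R v)"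
    by (rule zspanE)
  have "of_int (c v) *\<^sub>R v \<in> zspan X" if "v \<in> F" for v
    using that F(2) assms by (intro zspan_scaleR_of_int) blast
  then show "x \<in> zspan X" unfolding F(3) by (intro zspan_sum F(1))
qed

lemma zspan_mono: "M \<subseteq> M' \<Longrightarrow> zspan M \<subseteq> zspan M'"
  by (rule zspan_subset_zspan) (auto intro: zspan_superset)

lemma z_indep_subset: "z_indep S \<Longrightarrow> T \<subseteq> S \<Longrightarrow> z_indep T"
  unfolding z_indep_def by (meson order_trans)

lemma mem_cls_iff: "w \<in> cls S y \<longleftrightarrow> w - y \<in> zspan S"
  unfolding cls_def image_iff by (metis add_diff_cancel_left' diff_add_cancel add.commute)

lemma cls_eq_zspan_iff: "cls S y = zspan S \<longleftrightarrow> y \<in> zspan S"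
proof
  assume "cls S y = zspan S"
  moreover have "y \<in> cls S y" unfolding mem_cls_iff by (simp add: zspan_zero)
  ultimately show "y \<in> zspan S" by simp
next
  assume y: "y \<in> zspan S"
  show "cls S y = zspan S"
    unfolding mem_cls_iff set_eq_iff using zspan_add[OF _ y] zspan_diff[OF _ y] by fastforce
qed

lemma canon_rep_diff_mem_zspan_if_mem:
  "y \<in> zspan S \<Longrightarrow> canon_rep S (cls S y) - y \<in> zspan S"
  unfolding canon_rep_def cls_eq_zspan_iff by (simp add: zspan_uminus)

lemma Rats_common_denominator:
  fixes q :: "'a \<Rightarrow> real"
  assumes "finite I" "\<forall>i\<in>I. q i \<in> \<rat>"
  obtains D :: int where "D > 0" "\<forall>i\<in>I. of_int D * q i \<in> \<int>"
  using assms
proof (induction I arbitrary: thesis rule: finite_induct)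
  case empty
  then show ?case by (metis empty_iff zero_less_one)
next
  case (insert a I)
  then obtain D where D: "D > 0" "\<forall>i\<in>I. of_int D * q i \<in> \<int>" by auto
  obtain p s where ps: "q a = of_int p / of_int s" "s > 0"
    using insert.prems(2) by (metis Rats_cases' insertI1)
  have "of_int (D * s) * q i \<in> \<int>" if "i \<in> insert a I" for i
  proof (cases "i = a")
    case True
    then have "of_int (D * s) * q i = (of_int (D * p) :: real)" using ps by simp
    then show ?thesis by (metis Ints_of_int)
  next
    case False
    then have "of_int D * q i \<in> \<int>" using that D(2) by auto
    then have "of_int s * (of_int D * q i) \<in> \<int>" by (rule Ints_mult[OF Ints_of_int])
    then show ?thesis by (simp add: mult_ac)
  qed
  then show ?case using insert.prems(1) D(1) ps(2) by (metis mult_pos_pos)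
qed

section \<open>Bases with a simply laced Cartan Gram matrix\<close>

definition cartan_matrix :: "(nat \<Rightarrow> nat \<Rightarrow> bool) \<Rightarrow> nat \<Rightarrow> nat \<Rightarrow> real" where
  "cartan_matrix adj i j = (if i = j then 2 else if adj i j then -1 else 0)"

locale cartan_basis =
  fixes b :: "nat \<Rightarrow> vec" and n :: nat and adj :: "nat \<Rightarrow> nat \<Rightarrow> bool"
  assumes inj_basis: "inj_on b {..<n}"
    and inner_basis: "\<And>i j. i < n \<Longrightarrow> j < n \<Longrightarrow> b i \<bullet> b j = cartan_matrix adj i j"
    and z_indep_basis: "z_indep (b ` {..<n})"
begin

abbreviation base :: "vec set" where
  "base \<equiv> b ` {..<n}"

definition lincomb :: "(nat \<Rightarrow> real) \<Rightarrow> vec" where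
  "lincomb q = (\<Sum>i<n. q i *\<^sub>R b i)"

abbreviation intcomb :: "(nat \<Rightarrow> int) \<Rightarrow> vec" where
  "intcomb c \<equiv> lincomb (\<lambda>i. of_int (c i))"

definition integral_pairing :: "(nat \<Rightarrow> real) \<Rightarrow> bool" where
  "integral_pairing q \<longleftrightarrow> (\<forall>j<n. lincomb q \<bullet> b j \<in> \<int>)"

definition dual_coeffs :: "(nat \<Rightarrow> real) \<Rightarrow> nat \<Rightarrow> bool" where
  "dual_coeffs w r \<longleftrightarrow> (\<forall>j<n. lincomb w \<bullet> b j = (if j = r then 1 else 0))"

definition highest_coeffs :: "(nat \<Rightarrow> int) \<Rightarrow> bool" where
  "highest_coeffs m \<longleftrightarrow> intcomb m \<bullet> intcomb m = 2 \<and>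
     (\<forall>c. intcomb c \<bullet> intcomb c = 2 \<longrightarrow> (\<forall>i<n. c i \<le> m i))"

lemma lincomb_inner_basis: "j < n \<Longrightarrow> lincomb q \<bullet> b j = (\<Sum>i<n. q i * cartan_matrix adj i j)"
  unfolding lincomb_def by (simp add: inner_sum_left inner_basis)

lemma inner_lincomb: "lincomb q \<bullet> lincomb p = (\<Sum>j<n. p j * (lincomb q \<bullet> b j))"
  unfolding lincomb_def[of p] by (simp add: inner_sum_right)

lemma inner_lincomb_cartan:
  "lincomb q \<bullet> lincomb p = (\<Sum>j<n. p j * (\<Sum>i<n. q i * cartan_matrix adj i j))"
  unfolding inner_lincomb by (intro sum.cong) (simp_all add: lincomb_inner_basis)

lemma dual_coeffs_if_inverse:
  assumes "\<And>j. j < n \<Longrightarrow> (\<Sum>k<n. w k * cartan_matrix adj k j) = (if j = r then 1 else 0)"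
  shows "dual_coeffs w r"
  unfolding dual_coeffs_def using assms by (simp add: lincomb_inner_basis)

lemma lincomb_add: "lincomb (\<lambda>i. p i + q i) = lincomb p + lincomb q"
  unfolding lincomb_def by (simp add: scaleR_add_left sum.distrib)

lemma lincomb_uminus: "lincomb (\<lambda>i. - p i) = - lincomb p"
  unfolding lincomb_def by (simp add: sum_negf)

lemma lincomb_diff: "lincomb (\<lambda>i. p i - q i) = lincomb p - lincomb q"
  using lincomb_add[of p "\<lambda>i. - q i"] lincomb_uminus[of q] by simp

lemma lincomb_scaleR: "lincomb (\<lambda>i. a * p i) = a *\<^sub>R lincomb p"
  unfolding lincomb_def by (simp add: scaleR_sum_right)

lemma lincomb_cong: "(\<And>i. i < n \<Longrightarrow> p i = q i) \<Longrightarrow> lincomb p = lincomb q"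
  unfolding lincomb_def by (rule sum.cong) auto

lemma sum_scaleR_lincomb: "(\<Sum>v\<in>F. c v *\<^sub>R lincomb (p v)) = lincomb (\<lambda>i. \<Sum>v\<in>F. c v * p v i)"
  unfolding lincomb_def by (simp add: scaleR_sum_right scaleR_sum_left sum.swap[of _ F])

lemma integral_pairing_add:
  "integral_pairing p \<Longrightarrow> integral_pairing q \<Longrightarrow> integral_pairing (\<lambda>i. p i + q i)"
  unfolding integral_pairing_def by (simp add: lincomb_add inner_add_left)

lemma lincomb_orthogonal_eq_0:
  assumes "\<forall>j<n. lincomb q \<bullet> b j = 0"
  shows "lincomb q = 0"
proof -
  have "lincomb q \<bullet> lincomb q = 0" unfolding inner_lincomb[of q q] using assms by simp
  then show ?thesis by simp
qed

lemma coeff_eq_sum_dual: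
  assumes "dual_coeffs w i" "i < n"
  shows "q i = (\<Sum>j<n. w j * (lincomb q \<bullet> b j))"
proof -
  have "(\<Sum>j<n. q j * (lincomb w \<bullet> b j)) = (\<Sum>j<n. if j = i then q j else 0)"
    using assms(1) unfolding dual_coeffs_def by (intro sum.cong) auto
  then have "q i = (\<Sum>j<n. q j * (lincomb w \<bullet> b j))" using assms(2) by simp
  also have "\<dots> = lincomb w \<bullet> lincomb q" by (rule inner_lincomb[symmetric])
  also have "\<dots> = lincomb q \<bullet> lincomb w" by (rule inner_commute)
  also have "\<dots> = (\<Sum>j<n. w j * (lincomb q \<bullet> b j))" by (rule inner_lincomb)
  finally show ?thesis .
qed

lemma coeff_power2_le:
  assumes "dual_coeffs w i" "i < n" "lincomb q \<bullet> lincomb q = 2"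
  shows "(q i)\<^sup>2 \<le> 2 * w i"
proof -
  have "q i = lincomb q \<bullet> lincomb w" using coeff_eq_sum_dual[OF assms(1,2)] by (simp add: inner_lincomb)
  moreover have "w i = lincomb w \<bullet> lincomb w" using coeff_eq_sum_dual[OF assms(1,2)] by (simp add: inner_lincomb)
  ultimately show ?thesis
    using Cauchy_Schwarz_ineq[of "lincomb q" "lincomb w"] assms(3) by (simp add: mult.commute)
qed

lemma sum_base: "(\<Sum>v\<in>base. g v) = (\<Sum>i<n. g (b i))"
  using sum.reindex[OF inj_basis, of g] by simp

lemma inv_into_basis: "i < n \<Longrightarrow> inv_into {..<n} b (b i) = i"
  using inj_basis by (simp add: inv_into_f_f)

lemma basis_eq_iff: "i < n \<Longrightarrow> j < n \<Longrightarrow> b i = b j \<longleftrightarrow> i = j"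
  using inj_basis by (auto dest: inj_onD)

lemma lincomb_eq_sum_base: "lincomb q = (\<Sum>v\<in>base. q (inv_into {..<n} b v) *\<^sub>R v)"
  unfolding sum_base lincomb_def by (rule sum.cong) (auto simp: inv_into_basis)

lemma basis_mem_zspan: "i < n \<Longrightarrow> b i \<in> zspan base"
  by (rule zspan_superset) auto

lemma mem_zspan_base_iff: "x \<in> zspan base \<longleftrightarrow> (\<exists>c. x = intcomb c)"
proof
  assume "x \<in> zspan base"
  then obtain F c where F: "finite F" "F \<subseteq> base" "x = (\<Sum>v\<in>F. of_int (c v) *\<^sub>R v)"
    by (rule zspanE)
  have "x = (\<Sum>v\<in>base. of_int (if v \<in> F then c v else 0) *\<^sub>R v)"
    unfolding F(3) using F(1,2) by (intro sum.mono_neutral_cong_left) auto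
  also have "\<dots> = intcomb (\<lambda>i. if b i \<in> F then c (b i) else 0)"
    unfolding sum_base lincomb_def by (simp add: if_distrib)
  finally show "\<exists>c. x = intcomb c" by (rule exI[of _ "\<lambda>i. if b i \<in> F then c (b i) else 0"])
next
  assume "\<exists>c. x = intcomb c"
  then obtain c where "x = intcomb c" ..
  then show "x \<in> zspan base"
    unfolding lincomb_eq_sum_base mem_zspan_iff by (intro exI[of _ base] exI) auto
qed

lemma intcomb_eq_0D:
  assumes "intcomb c = 0" "i < n"
  shows "c i = 0"
proof -
  have "(\<Sum>v\<in>base. of_int (c (inv_into {..<n} b v)) *\<^sub>R v) = 0"
    using assms(1) unfolding lincomb_eq_sum_base .
  then have "\<forall>v\<in>base. c (inv_into {..<n} b v) = 0"
    using z_indep_basis unfolding z_indep_def by (meson finite_imageI finite_lessThan order_refl)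
  then show ?thesis using assms(2) inv_into_basis by force
qed

lemma lincomb_Rats_eq_0D:
  assumes "\<forall>i<n. q i \<in> \<rat>" "lincomb q = 0" "i < n"
  shows "q i = 0"
proof -
  obtain D :: int where D: "D > 0" "\<forall>i\<in>{..<n}. of_int D * q i \<in> \<int>"
    using Rats_common_denominator[of "{..<n}" q] assms(1) by auto
  define c where "c i = \<lfloor>of_int D * q i\<rfloor>" for i
  have c: "of_int (c i) = of_int D * q i" if "i < n" for i
    using D(2) that unfolding c_def by (metis Ints_cases floor_of_int lessThan_iff)
  have "intcomb c = lincomb (\<lambda>i. of_int D * q i)" by (rule lincomb_cong) (simp add: c)
  also have "\<dots> = 0" by (simp add: lincomb_scaleR assms(2))
  finally have "c i = 0" using intcomb_eq_0D assms(3) by blast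
  then show ?thesis using c[OF assms(3)] D(1) by simp
qed

lemma lincomb_mem_zspan_iff:
  assumes "\<forall>i<n. q i \<in> \<rat>"
  shows "lincomb q \<in> zspan base \<longleftrightarrow> (\<forall>i<n. q i \<in> \<int>)"
proof
  assume "lincomb q \<in> zspan base"
  then obtain c where c: "lincomb q = intcomb c" using mem_zspan_base_iff by auto
  have "q i - of_int (c i) = 0" if "i < n" for i
  proof (rule lincomb_Rats_eq_0D[OF _ _ that])
    show "\<forall>i<n. q i - of_int (c i) \<in> \<rat>" using assms by simp
    show "lincomb (\<lambda>i. q i - of_int (c i)) = 0" using c by (simp add: lincomb_diff)
  qed
  then show "\<forall>i<n. q i \<in> \<int>" by (metis Ints_of_int eq_iff_diff_eq_0)
next
  assume "\<forall>i<n. q i \<in> \<int>"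
  then have "lincomb q = intcomb (\<lambda>i. \<lfloor>q i\<rfloor>)"
    by (intro lincomb_cong) (auto elim: Ints_cases)
  then show "lincomb q \<in> zspan base" unfolding mem_zspan_base_iff by (rule exI[of _ "\<lambda>i. \<lfloor>q i\<rfloor>"])
qed

lemma qspan_zspan_baseE:
  assumes "x \<in> qspan (zspan base)"
  obtains q where "\<forall>i<n. q i \<in> \<rat>" "x = lincomb q"
proof -
  obtain F c where F: "finite F" "F \<subseteq> zspan base" "\<forall>v\<in>F. c v \<in> \<rat>"
    "x = (\<Sum>v\<in>F. c v *\<^sub>R v)" using assms unfolding qspan_def by auto
  obtain k where k: "\<forall>v\<in>F. v = intcomb (k v)"
    using F(2) mem_zspan_base_iff by (metis subsetD)
  have "x = (\<Sum>v\<in>F. c v *\<^sub>R intcomb (k v))"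
    unfolding F(4) by (rule sum.cong) (use k in auto)
  also have "\<dots> = lincomb (\<lambda>i. \<Sum>v\<in>F. c v * of_int (k v i))" by (rule sum_scaleR_lincomb)
  finally show ?thesis using F(3) by (intro that[of "\<lambda>i. \<Sum>v\<in>F. c v * of_int (k v i)"])
    (auto intro!: Rats_sum Rats_mult)
qed

lemma dual_latticeE:
  assumes "y \<in> dual_lattice (zspan base)"
  obtains q where "\<forall>i<n. q i \<in> \<rat>" "y = lincomb q" "integral_pairing q"
proof -
  from assms have y: "y \<in> qspan (zspan base)" "\<forall>v\<in>zspan base. negform y v \<in> \<int>"
    unfolding dual_lattice_def by auto
  obtain q where q: "\<forall>i<n. q i \<in> \<rat>" "y = lincomb q" using y(1) by (rule qspan_zspan_baseE)
  have "- (lincomb q \<bullet> b j) \<in> \<int>" if "j < n" for j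
    using y(2) basis_mem_zspan[OF that] q(2) by (simp add: negform_def)
  then have "integral_pairing q" unfolding integral_pairing_def by (metis Ints_minus minus_minus)
  with q that show ?thesis by blast
qed

lemma lincomb_mem_dual_lattice:
  assumes "\<forall>i<n. q i \<in> \<rat>" "integral_pairing q"
  shows "lincomb q \<in> dual_lattice (zspan base)"
proof -
  have "base \<subseteq> zspan base" using basis_mem_zspan by auto
  then have "lincomb q \<in> qspan (zspan base)"
    unfolding qspan_def lincomb_eq_sum_base using assms(1) inv_into_basis
    by (intro CollectI exI[of _ base] exI[of _ "\<lambda>v. q (inv_into {..<n} b v)"]) auto
  moreover have "negform (lincomb q) v \<in> \<int>" if "v \<in> zspan base" for v
  proof -
    obtain c where c: "v = intcomb c" using \<open>v \<in> zspan base\<close> mem_zspan_base_iff by auto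
    have "lincomb q \<bullet> intcomb c = (\<Sum>j<n. of_int (c j) * (lincomb q \<bullet> b j))"
      by (rule inner_lincomb)
    also have "\<dots> \<in> \<int>" using assms(2) unfolding integral_pairing_def by (intro Ints_sum Ints_mult) auto
    finally show ?thesis unfolding negform_def c by (rule Ints_minus)
  qed
  ultimately show ?thesis unfolding dual_lattice_def by auto
qed

lemma zcoord_intcomb:
  assumes "i < n"
  shows "zcoord base (intcomb c) (b i) = c i"
proof -
  define c0 where "c0 r = (if r \<in> base then c (inv_into {..<n} b r) else 0)" for r
  let ?P = "\<lambda>c'. (\<forall>r. r \<notin> base \<longrightarrow> c' r = 0) \<and> intcomb c = (\<Sum>r\<in>base. of_int (c' r) *\<^sub>R r)"
  have P0: "?P c0"
  proof
    show "\<forall>r. r \<notin> base \<longrightarrow> c0 r = 0" by (simp add: c0_def)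
    show "intcomb c = (\<Sum>r\<in>base. of_int (c0 r) *\<^sub>R r)"
      unfolding lincomb_eq_sum_base c0_def by (rule sum.cong) simp_all
  qed
  moreover have "c' = c0" if c': "?P c'" for c'
  proof
    fix r
    have "(\<Sum>r\<in>base. of_int (c' r - c0 r) *\<^sub>R r)
        = (\<Sum>r\<in>base. of_int (c' r) *\<^sub>R r) - (\<Sum>r\<in>base. of_int (c0 r) *\<^sub>R r)"
      by (simp add: scaleR_diff_left sum_subtractf)
    also have "\<dots> = 0" using c' P0 by simp
    finally have diff: "\<forall>r\<in>base. c' r - c0 r = 0"
      using z_indep_basis unfolding z_indep_def by (meson finite_imageI finite_lessThan order_refl)
    show "c' r = c0 r"
    proof (cases "r \<in> base")
      case True
      then show ?thesis using bspec[OF diff True] by simp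
    qed (use c' P0 in simp)
  qed
  ultimately have "zcoord base (intcomb c) = c0"
    unfolding zcoord_def by (rule the_equality)
  then show ?thesis using assms by (simp add: c0_def inv_into_basis)
qed

text \<open>Since \<open>negform\<close> is the negated dot product, \<open>r\<^sup>\<or>\<close> is minus the dual vector for the dot
  product.\<close>

lemma dualb_eq:
  assumes r: "r < n" and w: "\<forall>i<n. w i \<in> \<rat>" "dual_coeffs w r"
  shows "dualb base (b r) = - lincomb w"
  unfolding dualb_def
proof (rule the_equality)
  have "- lincomb w \<in> dual_lattice (zspan base)"
    unfolding lincomb_uminus[symmetric] using w
    by (intro lincomb_mem_dual_lattice) (auto simp: integral_pairing_def dual_coeffs_def lincomb_uminus)
  moreover have "\<forall>r'\<in>base. negform (- lincomb w) r' = (if r' = b r then 1 else 0)"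
    using w(2) r by (auto simp: negform_def dual_coeffs_def basis_eq_iff)
  ultimately show "- lincomb w \<in> dual_lattice (zspan base) \<and>
      (\<forall>r'\<in>base. negform (- lincomb w) r' = (if r' = b r then 1 else 0))" ..
next
  fix x assume x: "x \<in> dual_lattice (zspan base) \<and>
      (\<forall>r'\<in>base. negform x r' = (if r' = b r then 1 else 0))"
  then obtain q where q: "x = lincomb q" by (auto elim: dual_latticeE)
  have "lincomb (\<lambda>i. q i + w i) = 0"
  proof (rule lincomb_orthogonal_eq_0, intro allI impI)
    fix j assume j: "j < n"
    have "negform x (b j) = (if b j = b r then 1 else 0)" using x j by auto
    then show "lincomb (\<lambda>i. q i + w i) \<bullet> b j = 0"
      using w(2) j r q by (simp add: lincomb_add inner_add_left negform_def basis_eq_iff dual_coeffs_def)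
  qed
  then show "x = - lincomb w" using q by (simp add: lincomb_add eq_neg_iff_add_eq_0)
qed

lemma dualb_mem_cls_iff:
  assumes "r < n" "\<forall>i<n. w i \<in> \<rat>" "dual_coeffs w r" "\<forall>i<n. q i \<in> \<rat>"
  shows "dualb base (b r) \<in> cls base (lincomb q) \<longleftrightarrow> (\<forall>i<n. q i + w i \<in> \<int>)"
proof -
  have "dualb base (b r) - lincomb q = - lincomb (\<lambda>i. q i + w i)"
    using dualb_eq[OF assms(1-3)] by (simp add: lincomb_add)
  then have "dualb base (b r) - lincomb q \<in> zspan base \<longleftrightarrow> lincomb (\<lambda>i. q i + w i) \<in> zspan base"
    using zspan_uminus by fastforce
  moreover have "\<forall>i<n. q i + w i \<in> \<rat>" using assms(2,4) by auto
  ultimately show ?thesis unfolding mem_cls_iff by (simp add: lincomb_mem_zspan_iff)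
qed

lemma mem_lroots_base_iff: "\<alpha> \<in> lroots (zspan base) \<longleftrightarrow> (\<exists>c. \<alpha> = intcomb c \<and> \<alpha> \<bullet> \<alpha> = 2)"
  unfolding lroots_def negform_def mem_zspan_base_iff by auto

lemma highest_root_eq:
  assumes "highest_coeffs m"
  shows "highest_root base = intcomb m"
  unfolding highest_root_def
proof (rule the_equality)
  have le: "c i \<le> m i" if "intcomb c \<bullet> intcomb c = 2" "i < n" for c i
    using assms that unfolding highest_coeffs_def by blast
  have root: "intcomb m \<in> lroots (zspan base)"
    using assms unfolding highest_coeffs_def mem_lroots_base_iff by (intro exI[of _ m]) simp
  have "zcoord base \<alpha> (b i) \<le> zcoord base (intcomb m) (b i)"
    if "\<alpha> \<in> lroots (zspan base)" "i < n" for \<alpha> i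
    using that le unfolding mem_lroots_base_iff by (auto simp: zcoord_intcomb)
  with root show "intcomb m \<in> lroots (zspan base) \<and>
      (\<forall>\<alpha>\<in>lroots (zspan base). \<forall>r\<in>base. zcoord base \<alpha> r \<le> zcoord base (intcomb m) r)"
    by blast
  fix \<mu> assume \<mu>: "\<mu> \<in> lroots (zspan base) \<and>
      (\<forall>\<alpha>\<in>lroots (zspan base). \<forall>r\<in>base. zcoord base \<alpha> r \<le> zcoord base \<mu> r)"
  then obtain c where c: "\<mu> = intcomb c" "intcomb c \<bullet> intcomb c = 2"
    unfolding mem_lroots_base_iff by auto
  have "m i = c i" if "i < n" for i
  proof -
    have "zcoord base (intcomb m) (b i) \<le> zcoord base \<mu> (b i)" using \<mu> root that by blast
    then show ?thesis using le[OF c(2) that] that c(1) by (simp add: zcoord_intcomb)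
  qed
  then show "\<mu> = intcomb m" unfolding c(1) by (intro lincomb_cong) simp
qed

lemma Jset_eq:
  assumes "highest_coeffs m"
  shows "Jset base = b ` {i. i < n \<and> m i = 1}"
  unfolding Jset_def highest_root_eq[OF assms] by (auto simp: zcoord_intcomb)

lemma canon_rep_diff_mem_zspan:
  assumes m: "highest_coeffs m"
    and w_rat: "\<And>r i. r < n \<Longrightarrow> m r = 1 \<Longrightarrow> w r i \<in> \<rat>"
    and w_dual: "\<And>r. r < n \<Longrightarrow> m r = 1 \<Longrightarrow> dual_coeffs (w r) r"
    and classes: "\<And>q. integral_pairing q \<Longrightarrow>
        (\<forall>i<n. q i \<in> \<int>) \<or> (\<exists>!r. r < n \<and> m r = 1 \<and> (\<forall>i<n. q i + w r i \<in> \<int>))"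
    and y: "y \<in> dual_lattice (zspan base)"
  shows "canon_rep base (cls base y) - y \<in> zspan base"
proof (cases "y \<in> zspan base")
  case True
  then show ?thesis by (rule canon_rep_diff_mem_zspan_if_mem)
next
  case False
  obtain q where q: "\<forall>i<n. q i \<in> \<rat>" "y = lincomb q" "integral_pairing q"
    using y by (rule dual_latticeE)
  have nonint: "\<not> (\<forall>i<n. q i \<in> \<int>)" using False lincomb_mem_zspan_iff[OF q(1)] q(2) by simp
  then obtain r where r: "r < n" "m r = 1" "\<forall>i<n. q i + w r i \<in> \<int>"
    and unique: "\<And>r'. r' < n \<Longrightarrow> m r' = 1 \<Longrightarrow> \<forall>i<n. q i + w r' i \<in> \<int> \<Longrightarrow> r' = r"
    using classes[OF q(3)] by blast
  have in_cls: "dualb base (b r') \<in> cls base y \<longleftrightarrow> (\<forall>i<n. q i + w r' i \<in> \<int>)"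
    if "r' < n" "m r' = 1" for r'
    unfolding q(2) using w_rat[OF that] by (intro dualb_mem_cls_iff that(1) w_dual[OF that] q(1)) simp
  have "canon_rep base (cls base y) = (THE x. \<exists>r'\<in>Jset base. x = dualb base r' \<and> x \<in> cls base y)"
    unfolding canon_rep_def cls_eq_zspan_iff using False by simp
  also have "\<dots> = dualb base (b r)"
  proof (rule the_equality)
    show "\<exists>r'\<in>Jset base. dualb base (b r) = dualb base r' \<and> dualb base (b r) \<in> cls base y"
      using r in_cls Jset_eq[OF m] by auto
    fix x assume "\<exists>r'\<in>Jset base. x = dualb base r' \<and> x \<in> cls base y"
    then show "x = dualb base (b r)" using Jset_eq[OF m] in_cls unique by auto
  qed
  finally have "canon_rep base (cls base y) = dualb base (b r)" .
  then show ?thesis using in_cls[OF r(1,2)] r(3) by (simp add: mem_cls_iff)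
qed

lemma canon_rep_diff_mem_zspan_if_unimodular:
  assumes "\<And>q. integral_pairing q \<Longrightarrow> \<forall>i<n. q i \<in> \<int>"
    and y: "y \<in> dual_lattice (zspan base)"
  shows "canon_rep base (cls base y) - y \<in> zspan base"
proof -
  obtain q where "\<forall>i<n. q i \<in> \<rat>" "y = lincomb q" "integral_pairing q"
    using y by (rule dual_latticeE)
  then have "y \<in> zspan base" using assms(1) lincomb_mem_zspan_iff by blast
  then show ?thesis by (rule canon_rep_diff_mem_zspan_if_mem)
qed

lemma dvd_diff_if_Ints_add:
  fixes N e :: int and u :: "nat \<Rightarrow> int" and W :: "nat \<Rightarrow> nat \<Rightarrow> real"
  assumes "W r i - of_int (e * u r * u i) / of_int N \<in> \<int>" "W s i - of_int (e * u s * u i) / of_int N \<in> \<int>"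
    and "u i = 1" "x + W r i \<in> \<int>" "x + W s i \<in> \<int>" "N > 0"
  shows "N dvd e * (u r - u s)"
proof -
  have "(x + W r i) - (x + W s i) \<in> \<int>" using assms(4,5) by (rule Ints_diff)
  then have "(x + W r i) - (x + W s i) - (W r i - of_int (e * u r * u i) / of_int N)
      + (W s i - of_int (e * u s * u i) / of_int N) \<in> \<int>"
    by (rule Ints_add[OF Ints_diff[OF _ assms(1)] assms(2)])
  then have "of_int (e * (u r - u s)) / (of_int N :: real) \<in> \<int>"
    using assms(3) by (simp add: diff_divide_distrib algebra_simps)
  then obtain z where "of_int (e * (u r - u s)) / (of_int N :: real) = of_int z"
    by (auto elim: Ints_cases)
  then have "e * (u r - u s) = N * z" using assms(6) by (simp add: divide_eq_eq flip: of_int_mult)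
  then show ?thesis by simp
qed

lemma Ints_add_if_dvd_add:
  fixes N e t v s :: int and x w :: real
  assumes "x - of_int (e * t * s) / of_int N \<in> \<int>" "w - of_int (e * v * t) / of_int N \<in> \<int>"
    and "N dvd s + v" "N \<noteq> 0"
  shows "x + w \<in> \<int>"
proof -
  from assms(3) obtain k where k: "s + v = N * k" ..
  have "of_int (e * t * s) / of_int N + of_int (e * v * t) / of_int N
      = (of_int (e * t * (s + v)) / of_int N :: real)"
    by (simp add: algebra_simps add_divide_distrib)
  also have "\<dots> = of_int (e * t * k)" using k assms(4) by simp
  finally have "x + w = (x - of_int (e * t * s) / of_int N) + (w - of_int (e * v * t) / of_int N)
      + of_int (e * t * k)"
    by simp
  also have "\<dots> \<in> \<int>" using assms(1,2) by (intro Ints_add Ints_of_int)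
  finally show ?thesis .
qed

text \<open>Since \<open>q\<^sub>i = \<Sum>\<^sub>j W\<^sub>i\<^sub>j \<langle>q, b\<^sub>j\<rangle>\<close> and \<open>W\<^sub>i\<^sub>j \<equiv> e u\<^sub>i u\<^sub>j / N\<close> modulo \<open>\<int>\<close>, the class of \<open>q\<close>
  modulo \<open>\<int>\<^sup>n\<close> is \<open>e u\<^sub>i s / N\<close> for the single integer \<open>s = \<Sum>\<^sub>j u\<^sub>j \<langle>q, b\<^sub>j\<rangle>\<close>.\<close>

lemma coeffs_cong_cyclic:
  fixes N e :: int and u :: "nat \<Rightarrow> int" and W :: "nat \<Rightarrow> nat \<Rightarrow> real"
  assumes W_dual: "\<And>i. i < n \<Longrightarrow> dual_coeffs (W i) i"
    and W_cong: "\<And>i j. i < n \<Longrightarrow> j < n \<Longrightarrow> W i j - of_int (e * u i * u j) / of_int N \<in> \<int>"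
    and q: "integral_pairing q"
  obtains s :: int where "\<And>i. i < n \<Longrightarrow> q i - of_int (e * u i * s) / of_int N \<in> \<int>"
proof -
  have "\<forall>j<n. \<exists>P. lincomb q \<bullet> b j = of_int P"
    using q unfolding integral_pairing_def by (auto elim: Ints_cases)
  then obtain P where P: "\<forall>j<n. lincomb q \<bullet> b j = of_int (P j)" by metis
  define s where "s = (\<Sum>j<n. u j * P j)"
  have "q i - of_int (e * u i * s) / of_int N \<in> \<int>" if i: "i < n" for i
  proof -
    have "q i = (\<Sum>j<n. W i j * of_int (P j))"
      using coeff_eq_sum_dual[OF W_dual[OF i] i, of q] P by simp
    then have "q i - of_int (e * u i * s) / of_int N
        = (\<Sum>j<n. (W i j - of_int (e * u i * u j) / of_int N) * of_int (P j))"
      unfolding s_def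
      by (simp add: sum_subtractf sum_divide_distrib sum_distrib_left algebra_simps)
    also have "\<dots> \<in> \<int>" using W_cong i by (intro Ints_sum Ints_mult) auto
    finally show ?thesis .
  qed
  then show ?thesis by (rule that)
qed

lemma classes_cyclic:
  fixes N e :: int and u :: "nat \<Rightarrow> int" and W :: "nat \<Rightarrow> nat \<Rightarrow> real" and J :: "nat set"
  assumes W_dual: "\<And>i. i < n \<Longrightarrow> dual_coeffs (W i) i"
    and W_cong: "\<And>i j. i < n \<Longrightarrow> j < n \<Longrightarrow> W i j - of_int (e * u i * u j) / of_int N \<in> \<int>"
    and N: "N > 0" and iz: "iz < n" "u iz = 1"
    and J_surj: "\<And>t. \<not> N dvd t \<Longrightarrow> \<exists>r\<in>J. N dvd t + u r"
    and J_inj: "\<And>r r'. r \<in> J \<Longrightarrow> r' \<in> J \<Longrightarrow> N dvd e * (u r - u r') \<Longrightarrow> r = r'"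
    and J: "J \<subseteq> {..<n}"
    and q: "integral_pairing q"
  shows "(\<forall>i<n. q i \<in> \<int>) \<or> (\<exists>!r. r \<in> J \<and> (\<forall>i<n. q i + W r i \<in> \<int>))"
proof -
  obtain s where q_cong: "\<And>i. i < n \<Longrightarrow> q i - of_int (e * u i * s) / of_int N \<in> \<int>"
    using coeffs_cong_cyclic[OF W_dual W_cong q] by blast
  show ?thesis
  proof (cases "N dvd s")
    case True
    have "q i \<in> \<int>" if "i < n" for i
      using Ints_add_if_dvd_add[OF q_cong[OF that], of 0 0] True N by simp
    then show ?thesis by simp
  next
    case False
    then obtain r where r: "r \<in> J" "N dvd s + u r" using J_surj by blast
    then have "q i + W r i \<in> \<int>" if "i < n" for i
      using Ints_add_if_dvd_add[OF q_cong[OF that] W_cong[OF _ that]] J N by auto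
    moreover have "r1 = r2"
      if "r1 \<in> J" "\<forall>i<n. q i + W r1 i \<in> \<int>" "r2 \<in> J" "\<forall>i<n. q i + W r2 i \<in> \<int>" for r1 r2
    proof (rule J_inj)
      show "r1 \<in> J" "r2 \<in> J" using that by simp_all
      then have "r1 < n" "r2 < n" using J by auto
      then show "N dvd e * (u r1 - u r2)"
        using W_cong[OF _ iz(1)] iz that
        by (intro N dvd_diff_if_Ints_add[where i = iz and x = "q iz" and u = u and W = W
              and r = r1 and s = r2]) auto
    qed
    ultimately show ?thesis using r(1) by blast
  qed
qed

lemma canon_rep_diff_mem_zspan_cyclic:
  fixes N e :: int and m u :: "nat \<Rightarrow> int" and W :: "nat \<Rightarrow> nat \<Rightarrow> real"
  assumes m: "highest_coeffs m"
    and W_rat: "\<And>i j. W i j \<in> \<rat>"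
    and W_dual: "\<And>i. i < n \<Longrightarrow> dual_coeffs (W i) i"
    and W_cong: "\<And>i j. i < n \<Longrightarrow> j < n \<Longrightarrow> W i j - of_int (e * u i * u j) / of_int N \<in> \<int>"
    and N: "N > 0" and iz: "iz < n" "u iz = 1"
    and J_surj: "\<And>t. \<not> N dvd t \<Longrightarrow> \<exists>r<n. m r = 1 \<and> N dvd t + u r"
    and J_inj: "\<And>r r'. r < n \<Longrightarrow> r' < n \<Longrightarrow> m r = 1 \<Longrightarrow> m r' = 1 \<Longrightarrow>
        N dvd e * (u r - u r') \<Longrightarrow> r = r'"
    and y: "y \<in> dual_lattice (zspan base)"
  shows "canon_rep base (cls base y) - y \<in> zspan base"
proof (rule canon_rep_diff_mem_zspan[OF m _ W_dual _ y])
  show "W r i \<in> \<rat>" for r i by (rule W_rat)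
  fix q assume "integral_pairing q"
  from classes_cyclic[OF W_dual W_cong N iz _ _ _ this, of "{r. r < n \<and> m r = 1}"] J_surj J_inj
  show "(\<forall>i<n. q i \<in> \<int>) \<or> (\<exists>!r. r < n \<and> m r = 1 \<and> (\<forall>i<n. q i + W r i \<in> \<int>))"
    by auto
qed

lemma highest_coeffs_if_power2_le:
  assumes W_dual: "\<And>i. i < n \<Longrightarrow> dual_coeffs (W i) i"
    and root: "intcomb m \<bullet> intcomb m = 2"
    and bound: "\<And>i x. i < n \<Longrightarrow> (of_int x)\<^sup>2 \<le> 2 * W i i \<Longrightarrow> x \<le> m i"
  shows "highest_coeffs m"
  unfolding highest_coeffs_def using root bound coeff_power2_le[OF W_dual] by blast

end

section \<open>Type \<open>A\<close>\<close>

definition padded :: "nat \<Rightarrow> (nat \<Rightarrow> 'a::zero) \<Rightarrow> nat \<Rightarrow> 'a" where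
  "padded n c k = (if k = 0 \<or> n < k then 0 else c (k - 1))"

lemma sum_cartan_matrix_A:
  assumes "j < n"
  shows "(\<Sum>i<n. q i * cartan_matrix adjA i j)
    = 2 * padded n q (Suc j) - padded n q j - padded n q (Suc (Suc j))"
proof -
  have "q i * cartan_matrix adjA i j = (if i = j then 2 * q i else 0)
      - (if i = j - 1 then (if 0 < j then q i else 0) else 0) - (if i = Suc j then q i else 0)" for i
    by (auto simp: cartan_matrix_def adjA_def)
  then have "(\<Sum>i<n. q i * cartan_matrix adjA i j) = (\<Sum>i<n. if i = j then 2 * q i else 0)
      - (\<Sum>i<n. if i = j - 1 then (if 0 < j then q i else 0) else 0)
      - (\<Sum>i<n. if i = Suc j then q i else 0)"
    by (simp only: sum_subtractf)
  also have "\<dots> = 2 * padded n q (Suc j) - padded n q j - padded n q (Suc (Suc j))"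
    using assms by (simp add: sum.delta padded_def)
  finally show ?thesis .
qed

lemma sum_mult_second_diff:
  fixes X :: "nat \<Rightarrow> 'a::comm_ring_1"
  assumes "X 0 = 0"
  shows "(\<Sum>j<m. X (Suc j) * (2 * X (Suc j) - X j - X (Suc (Suc j))))
    = (\<Sum>j<m. (X (Suc j) - X j)\<^sup>2) - X m * (X (Suc m) - X m)"
  by (induction m) (use assms in \<open>simp_all add: power2_eq_square algebra_simps\<close>)

lemma abs_le_power2_int: "\<bar>d :: int\<bar> \<le> d\<^sup>2"
proof (cases "d = 0")
  case False
  then have "\<bar>d\<bar> * 1 \<le> \<bar>d\<bar> * \<bar>d\<bar>" by (intro mult_left_mono) simp_all
  then show ?thesis by (simp add: power2_eq_square abs_mult_self_eq)
qed simp

lemma abs_sum_le_sum_power2: "\<bar>\<Sum>j\<in>A. d j :: int\<bar> \<le> (\<Sum>j\<in>A. (d j)\<^sup>2)"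
  by (rule order_trans[OF sum_abs sum_mono]) (rule abs_le_power2_int)

lemma abs_le_sum_power2_diff:
  fixes Y :: "nat \<Rightarrow> int"
  assumes "Y 0 = 0"
  shows "\<bar>Y k\<bar> \<le> (\<Sum>j<k. (Y (Suc j) - Y j)\<^sup>2)"
  using abs_sum_le_sum_power2[of "\<lambda>j. Y (Suc j) - Y j" "{..<k}"] assms
  by (simp add: sum_lessThan_telescope)

lemma int_le_if_power2_le:
  fixes x k :: int and B :: "'a :: linordered_idom"
  assumes "(of_int x)\<^sup>2 \<le> B" "B < (of_int k + 1)\<^sup>2" "0 \<le> k"
  shows "x \<le> k"
proof (rule ccontr)
  assume "\<not> x \<le> k"
  then have "of_int (k + 1) \<le> (of_int x :: 'a)" by (simp only: of_int_le_iff)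
  then have "(of_int k + 1)\<^sup>2 \<le> (of_int x :: 'a)\<^sup>2" using assms(3) by (intro power_mono) simp_all
  then show False using assms(1,2) by simp
qed

lemma abs_le_1_if_sum_power2_diff_eq_2:
  fixes Y :: "nat \<Rightarrow> int"
  assumes "Y 0 = 0" "Y (Suc n) = 0" "(\<Sum>j<Suc n. (Y (Suc j) - Y j)\<^sup>2) = 2" "k \<le> n"
  shows "\<bar>Y k\<bar> \<le> 1"
proof -
  have "\<bar>Y k\<bar> \<le> (\<Sum>j<k. (Y (Suc j) - Y j)\<^sup>2)" using assms(1) by (rule abs_le_sum_power2_diff)
  moreover have "\<bar>- Y k\<bar> \<le> (\<Sum>j=k..<Suc n. (Y (Suc j) - Y j)\<^sup>2)"
    using abs_sum_le_sum_power2[of "\<lambda>j. Y (Suc j) - Y j" "{k..<Suc n}"] assms(2,4)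
    by (simp add: sum_Suc_diff')
  moreover have "(\<Sum>j<k. (Y (Suc j) - Y j)\<^sup>2) + (\<Sum>j=k..<Suc n. (Y (Suc j) - Y j)\<^sup>2) = 2"
    using assms(3,4) sum.atLeastLessThan_concat[of 0 k "Suc n" "\<lambda>j. (Y (Suc j) - Y j)\<^sup>2"]
    by (simp add: atLeast0LessThan)
  ultimately show ?thesis by simp
qed

definition coweight_A :: "nat \<Rightarrow> nat \<Rightarrow> nat \<Rightarrow> real" where
  "coweight_A n r i = real (min (Suc i) (Suc r)) - real (Suc i) * real (Suc r) / real (Suc n)"

context cartan_basis
begin

lemma inner_basis_A:
  "adj = adjA \<Longrightarrow> j < n \<Longrightarrow>
    lincomb q \<bullet> b j = 2 * padded n q (Suc j) - padded n q j - padded n q (Suc (Suc j))"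
  by (simp add: lincomb_inner_basis sum_cartan_matrix_A)

lemma inner_self_A:
  assumes "adj = adjA"
  shows "lincomb c \<bullet> lincomb c = (\<Sum>j<Suc n. (padded n c (Suc j) - padded n c j)\<^sup>2)"
proof -
  let ?X = "padded n c"
  have "lincomb c \<bullet> lincomb c = (\<Sum>j<n. ?X (Suc j) * (2 * ?X (Suc j) - ?X j - ?X (Suc (Suc j))))"
    unfolding inner_lincomb by (rule sum.cong) (auto simp: inner_basis_A[OF assms] padded_def)
  also have "\<dots> = (\<Sum>j<n. (?X (Suc j) - ?X j)\<^sup>2) - ?X n * (?X (Suc n) - ?X n)"
    by (rule sum_mult_second_diff) (simp add: padded_def)
  also have "\<dots> = (\<Sum>j<Suc n. (?X (Suc j) - ?X j)\<^sup>2)"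
    by (simp add: padded_def power2_eq_square)
  finally show ?thesis .
qed

lemma highest_coeffs_A:
  assumes "adj = adjA" "n \<ge> 1"
  shows "highest_coeffs (\<lambda>_. 1)"
  unfolding highest_coeffs_def
proof (intro conjI allI impI)
  have "(\<Sum>j<Suc n. (padded n (\<lambda>i. of_int 1) (Suc j) - padded n (\<lambda>i. of_int 1) j)\<^sup>2)
      = (\<Sum>j<Suc n. (if j = 0 then 1 else 0) + (if j = n then 1 else 0) :: real)"
    using assms(2) by (intro sum.cong) (auto simp: padded_def)
  then show "intcomb (\<lambda>_. 1) \<bullet> intcomb (\<lambda>_. 1) = 2"
    unfolding inner_self_A[OF assms(1)] by (simp add: sum.distrib)
next
  fix c i assume c: "intcomb c \<bullet> intcomb c = 2" and i: "i < n"
  have "padded n (\<lambda>i. of_int (c i)) k = (of_int (padded n c k) :: real)" for k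
    by (simp add: padded_def)
  then have "of_int (\<Sum>j<Suc n. (padded n c (Suc j) - padded n c j)\<^sup>2) = (2::real)"
    using c unfolding inner_self_A[OF assms(1)] by simp
  then have "(\<Sum>j<Suc n. (padded n c (Suc j) - padded n c j)\<^sup>2) = 2" by linarith
  then have "\<bar>padded n c (Suc i)\<bar> \<le> 1"
    by (rule abs_le_1_if_sum_power2_diff_eq_2[rotated 2]) (use i in \<open>auto simp: padded_def\<close>)
  then show "c i \<le> 1" using i by (simp add: padded_def)
qed

lemma dual_coeffs_coweight_A:
  assumes "adj = adjA" "r < n"
  shows "dual_coeffs (coweight_A n r) r"
  unfolding dual_coeffs_def
proof (intro allI impI)
  fix j assume j: "j < n"
  define \<rho> where "\<rho> = real (Suc r) / real (Suc n)"
  define h where "h k = real (min k (Suc r)) - real k * \<rho>" for k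
  have X: "padded n (coweight_A n r) k = h k" if k: "k \<le> Suc n" for k
  proof -
    consider "k = 0" | "0 < k" "k \<le> n" | "k = Suc n" using k by (metis le_SucE neq0_conv)
    then show ?thesis
    proof cases
      case 3
      then show ?thesis using assms(2) by (simp del: of_nat_Suc add: padded_def h_def \<rho>_def min_def)
    qed (simp_all del: of_nat_Suc add: padded_def coweight_A_def h_def \<rho>_def)
  qed
  have "lincomb (coweight_A n r) \<bullet> b j = 2 * h (Suc j) - h j - h (Suc (Suc j))"
    using j by (simp add: inner_basis_A[OF assms(1) j] X)
  also have "\<dots> = real (2 * min (Suc j) (Suc r)) - real (min j (Suc r)) - real (min (Suc (Suc j)) (Suc r))"
    unfolding h_def by (simp add: algebra_simps)
  also have "\<dots> = (if j = r then 1 else 0)"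
    by (cases "j < r"; cases "j = r") (simp_all add: min_def)
  finally show "lincomb (coweight_A n r) \<bullet> b j = (if j = r then 1 else 0)" .
qed

lemma canon_rep_diff_mem_zspan_A:
  assumes "adj = adjA" "n \<ge> 1" "y \<in> dual_lattice (zspan base)"
  shows "canon_rep base (cls base y) - y \<in> zspan base"
proof (rule canon_rep_diff_mem_zspan_cyclic[where W = "coweight_A n" and e = "-1"
      and u = "\<lambda>i. int (Suc i)" and N = "int (Suc n)" and iz = 0])
  show "highest_coeffs (\<lambda>_. 1)" by (rule highest_coeffs_A[OF assms(1,2)])
  show "coweight_A n i j \<in> \<rat>" for i j by (simp add: coweight_A_def)
  show "dual_coeffs (coweight_A n i) i" if "i < n" for i by (rule dual_coeffs_coweight_A[OF assms(1) that])
  show "coweight_A n i j - of_int (- 1 * int (Suc i) * int (Suc j)) / of_int (int (Suc n)) \<in> \<int>" for i j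
  proof -
    have "coweight_A n i j - of_int (- 1 * int (Suc i) * int (Suc j)) / of_int (int (Suc n))
        = of_nat (min (Suc j) (Suc i))"
      unfolding coweight_A_def by (simp del: of_nat_Suc add: mult.commute)
    then show ?thesis by simp
  qed
  show "\<exists>r<n. (1::int) = 1 \<and> int (Suc n) dvd t + int (Suc r)" if t: "\<not> int (Suc n) dvd t" for t
  proof -
    define s where "s = (- t) mod int (Suc n)"
    have "s \<noteq> 0" using t unfolding s_def by (simp add: mod_eq_0_iff_dvd)
    moreover have "0 \<le> s" "s < int (Suc n)" unfolding s_def by simp_all
    moreover have "int (Suc n) dvd t + s" unfolding s_def by (simp add: dvd_eq_mod_eq_0 mod_add_right_eq)
    ultimately show ?thesis by (intro exI[of _ "nat s - 1"]) auto
  qed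
  show "r = r'" if "r < n" "r' < n" "int (Suc n) dvd - 1 * (int (Suc r) - int (Suc r'))" for r r'
  proof (rule ccontr)
    assume "r \<noteq> r'"
    then have "int (Suc n) \<le> \<bar>int r - int r'\<bar>"
      using that(3) by (intro zdvd_imp_le) (simp_all add: dvd_diff_commute)
    then show False using that(1,2) by linarith
  qed
qed (use assms in simp_all)

end

section \<open>Type \<open>D\<close>\<close>

lemma sum_cartan_matrix_D:
  assumes "n = Suc (Suc (Suc p))" "j < n"
  shows "(\<Sum>i<n. q i * cartan_matrix (adjD n) i j) = 2 * q j
    - (if 0 < j \<and> j < Suc (Suc p) then q (j - 1) else 0) - (if Suc j < Suc (Suc p) then q (Suc j) else 0)
    - (if j = p then q (Suc (Suc p)) else 0) - (if j = Suc (Suc p) then q p else 0)"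
proof -
  have "adjD n i j \<longleftrightarrow> (Suc i = j \<and> j < Suc (Suc p)) \<or> (i = Suc j \<and> i < Suc (Suc p))
      \<or> (i = Suc (Suc p) \<and> j = p) \<or> (i = p \<and> j = Suc (Suc p))" for i
    unfolding adjD_def adjA_def assms(1) by auto
  then have entry: "q i * cartan_matrix (adjD n) i j = (if i = j then 2 * q i else 0)
      - (if Suc i = j \<and> j < Suc (Suc p) then q i else 0) - (if i = Suc j \<and> i < Suc (Suc p) then q i else 0)
      - (if i = Suc (Suc p) \<and> j = p then q i else 0) - (if i = p \<and> j = Suc (Suc p) then q i else 0)" for i
    unfolding cartan_matrix_def by auto
  have nested:
    "(if Suc i = j \<and> j < S then x else 0) = (if i = j - 1 then (if 0 < j \<and> j < S then x else 0) else 0)"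
    "(if i = Suc j \<and> i < S then x else 0) = (if i = Suc j then (if Suc j < S then x else 0) else 0)"
    "(if i = a \<and> j = c then x else 0) = (if i = a then (if j = c then x else 0) else 0)"
    for i a c S and x :: real
    by auto
  have "j - 1 < n" "Suc (Suc p) < n" "p < n" using assms by auto
  moreover have "(if Suc j < n then (if Suc j < Suc (Suc p) then q (Suc j) else 0) else 0)
      = (if Suc j < Suc (Suc p) then q (Suc j) else 0)"
    using assms by auto
  ultimately show ?thesis
    unfolding entry nested sum_subtractf using assms(2)
    by (simp only: sum.delta finite_lessThan lessThan_iff if_True)
qed

lemma second_diff_Ints_linear:
  fixes X :: "nat \<Rightarrow> real"
  assumes "X 0 = 0" and second_diff: "\<And>k. 1 \<le> k \<Longrightarrow> k \<le> L \<Longrightarrow> 2 * X k - X (k - 1) - X (Suc k) \<in> \<int>"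
    and "k \<le> Suc L"
  shows "X k - of_nat k * X 1 \<in> \<int>"
proof -
  have "k \<le> L \<longrightarrow> X k - of_nat k * X 1 \<in> \<int> \<and> X (Suc k) - of_nat (Suc k) * X 1 \<in> \<int>" for k
  proof (induction k)
    case 0
    then show ?case using assms(1) by simp
  next
    case (Suc k)
    show ?case
    proof
      assume k: "Suc k \<le> L"
      then have IH: "X k - of_nat k * X 1 \<in> \<int>" "X (Suc k) - of_nat (Suc k) * X 1 \<in> \<int>"
        using Suc by auto
      have z: "2 * X (Suc k) - X k - X (Suc (Suc k)) \<in> \<int>" using second_diff[of "Suc k"] k by simp
      have "X (Suc (Suc k)) - of_nat (Suc (Suc k)) * X 1 = 2 * (X (Suc k) - of_nat (Suc k) * X 1)
          - (X k - of_nat k * X 1) - (2 * X (Suc k) - X k - X (Suc (Suc k)))"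
        by (simp add: algebra_simps)
      also have "\<dots> \<in> \<int>" by (rule Ints_diff[OF Ints_diff[OF Ints_mult[OF Ints_numeral IH(2)] IH(1)] z])
      finally show "X (Suc k) - of_nat (Suc k) * X 1 \<in> \<int> \<and>
          X (Suc (Suc k)) - of_nat (Suc (Suc k)) * X 1 \<in> \<int>"
        using IH by simp
    qed
  qed
  then show ?thesis using assms(1,3) by (cases k) (auto simp: le_Suc_eq)
qed

text \<open>With \<open>n = p + 3\<close>, the vertices \<open>0, \<dots>, p + 1\<close> of the diagram \<open>adjD n\<close> form a chain and
  \<open>p + 2\<close> is attached to \<open>p\<close>; the end nodes are \<open>0\<close>, \<open>p + 1\<close> and \<open>p + 2\<close>, and \<open>coweight_D p r\<close>
  is only meaningful for an end node \<open>r\<close>.\<close>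

definition hcoeffs_D :: "nat \<Rightarrow> nat \<Rightarrow> int" where
  "hcoeffs_D p i = (if i = 0 \<or> p < i then 1 else 2)"

definition coweight_D :: "nat \<Rightarrow> nat \<Rightarrow> nat \<Rightarrow> real" where
  "coweight_D p r i = (if r = 0 then (if i \<le> p then 1 else 1/2)
     else if i \<le> p then real (Suc i) / 2 else if i = r then (real p + 3) / 4 else (real p + 1) / 4)"

locale cartan_basis_D = cartan_basis b n "adjD n" for b n +
  fixes p :: nat
  assumes n_eq: "n = Suc (Suc (Suc p))" and p_pos: "1 \<le> p"
begin

lemma end_nodes_less: "p < n" "Suc p < n" "Suc (Suc p) < n"
  using n_eq by simp_all

lemma inner_basis_D:
  "j < n \<Longrightarrow> lincomb q \<bullet> b j = 2 * q j
    - (if 0 < j \<and> j < Suc (Suc p) then q (j - 1) else 0) - (if Suc j < Suc (Suc p) then q (Suc j) else 0)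
    - (if j = p then q (Suc (Suc p)) else 0) - (if j = Suc (Suc p) then q p else 0)"
  by (simp add: lincomb_inner_basis sum_cartan_matrix_D[OF n_eq])

lemma inner_self_D:
  "lincomb c \<bullet> lincomb c = (\<Sum>j<Suc p. (padded n c (Suc j) - padded n c j)\<^sup>2)
     + (c (Suc p) + c (Suc (Suc p)) - c p)\<^sup>2 + (c (Suc (Suc p)) - c (Suc p))\<^sup>2"
proof -
  let ?X = "padded n c"
  have chain: "c j * (lincomb c \<bullet> b j) = ?X (Suc j) * (2 * ?X (Suc j) - ?X j - ?X (Suc (Suc j)))
      - (if j = p then c p * c (Suc (Suc p)) else 0)" if "j < Suc p" for j
  proof -
    have "j < n" "\<not> n < Suc j" "\<not> n < Suc (Suc j)" using that n_eq by linarith+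
    then show ?thesis using that by (simp add: inner_basis_D padded_def algebra_simps)
  qed
  have split: "(\<Sum>j<n. f j) = (\<Sum>j<Suc p. f j) + f (Suc p) + f (Suc (Suc p))" for f :: "nat \<Rightarrow> real"
    using n_eq by simp
  have "lincomb c \<bullet> lincomb c = (\<Sum>j<Suc p. c j * (lincomb c \<bullet> b j))
      + c (Suc p) * (lincomb c \<bullet> b (Suc p)) + c (Suc (Suc p)) * (lincomb c \<bullet> b (Suc (Suc p)))"
    unfolding inner_lincomb split ..
  also have "(\<Sum>j<Suc p. c j * (lincomb c \<bullet> b j))
      = (\<Sum>j<Suc p. ?X (Suc j) * (2 * ?X (Suc j) - ?X j - ?X (Suc (Suc j)))) - c p * c (Suc (Suc p))"
    by (simp add: chain sum_subtractf sum.delta)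
  also have "(\<Sum>j<Suc p. ?X (Suc j) * (2 * ?X (Suc j) - ?X j - ?X (Suc (Suc j))))
      = (\<Sum>j<Suc p. (?X (Suc j) - ?X j)\<^sup>2) - ?X (Suc p) * (?X (Suc (Suc p)) - ?X (Suc p))"
    by (rule sum_mult_second_diff) (simp add: padded_def)
  also have "?X (Suc p) = c p" by (simp add: padded_def n_eq)
  also have "?X (Suc (Suc p)) = c (Suc p)" by (simp add: padded_def n_eq)
  also have "lincomb c \<bullet> b (Suc p) = 2 * c (Suc p) - c p"
    by (simp add: inner_basis_D end_nodes_less)
  also have "lincomb c \<bullet> b (Suc (Suc p)) = 2 * c (Suc (Suc p)) - c p"
    by (simp add: inner_basis_D end_nodes_less)
  finally show ?thesis by (simp add: power2_eq_square algebra_simps)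
qed

lemma hcoeffs_D_root: "intcomb (hcoeffs_D p) \<bullet> intcomb (hcoeffs_D p) = 2"
proof -
  let ?c = "\<lambda>i. of_int (hcoeffs_D p i) :: real"
  have "(\<Sum>j<Suc p. (padded n ?c (Suc j) - padded n ?c j)\<^sup>2)
      = (\<Sum>j<Suc p. (if j = 0 then 1 else 0) + (if j = 1 then 1 else 0))"
    using n_eq p_pos by (intro sum.cong) (auto simp: padded_def hcoeffs_D_def)
  also have "\<dots> = 2" using p_pos by (simp add: sum.distrib)
  finally show ?thesis unfolding inner_self_D using p_pos by (simp add: hcoeffs_D_def)
qed

lemma hcoeffs_D_max:
  assumes c: "intcomb c \<bullet> intcomb c = 2" and i: "i < n"
  shows "c i \<le> hcoeffs_D p i"
proof -
  let ?Y = "padded n c"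
  let ?S = "\<Sum>j<Suc p. (?Y (Suc j) - ?Y j)\<^sup>2"
  let ?x = "c (Suc p) + c (Suc (Suc p)) - c p" and ?y = "c (Suc (Suc p)) - c (Suc p)"
  have "padded n (\<lambda>i. of_int (c i)) k = (of_int (?Y k) :: real)" for k by (simp add: padded_def)
  then have "of_int (?S + ?x\<^sup>2 + ?y\<^sup>2) = (2::real)" using c unfolding inner_self_D by simp
  then have S: "?S + ?x\<^sup>2 + ?y\<^sup>2 = 2" by linarith
  have prefix: "\<bar>c j\<bar> \<le> ?S" if "j \<le> p" for j
  proof -
    have "\<bar>?Y (Suc j)\<bar> \<le> (\<Sum>k<Suc j. (?Y (Suc k) - ?Y k)\<^sup>2)"
      by (rule abs_le_sum_power2_diff) (simp add: padded_def)
    also have "\<dots> \<le> ?S" using that by (intro sum_mono2) auto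
    finally show ?thesis using that n_eq by (simp add: padded_def)
  qed
  have "(c 0)\<^sup>2 \<le> ?S"
    using sum_mono2[of "{..<Suc p}" "{..<1}" "\<lambda>j. (?Y (Suc j) - ?Y j)\<^sup>2"] n_eq
    by (simp add: padded_def)
  then have "(c 0)\<^sup>2 \<le> 2" using S zero_le_power2[of ?x] zero_le_power2[of ?y] by linarith
  then have "c 0 \<le> 1" using int_le_if_power2_le[of "c 0" "2::int" 1] by simp
  have abs_le: "\<bar>?x\<bar> \<le> ?x\<^sup>2" "\<bar>?y\<bar> \<le> ?y\<^sup>2" by (rule abs_le_power2_int)+
  show ?thesis
  proof (cases "i = 0")
    case True
    then show ?thesis using \<open>c 0 \<le> 1\<close> by (simp add: hcoeffs_D_def)
  next
    case False
    show ?thesis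
    proof (cases "i \<le> p")
      case True
      then have "c i \<le> 2" using prefix[OF True] S abs_le by linarith
      then show ?thesis using False True by (simp add: hcoeffs_D_def)
    next
      case False
      moreover have "c (Suc p) \<le> 1" "c (Suc (Suc p)) \<le> 1" using S abs_le prefix[of p] by linarith+
      ultimately show ?thesis using i n_eq by (auto simp: hcoeffs_D_def less_Suc_eq)
    qed
  qed
qed

lemma highest_coeffs_D: "highest_coeffs (hcoeffs_D p)"
  unfolding highest_coeffs_def using hcoeffs_D_root hcoeffs_D_max by blast

lemma minuscule_D_iff: "r < n \<and> hcoeffs_D p r = 1 \<longleftrightarrow> r = 0 \<or> r = Suc p \<or> r = Suc (Suc p)"
  using n_eq by (auto simp: hcoeffs_D_def)

lemma dual_coeffs_coweight_D:
  assumes "r = 0 \<or> r = Suc p \<or> r = Suc (Suc p)"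
  shows "dual_coeffs (coweight_D p r) r"
  unfolding dual_coeffs_def
proof (intro allI impI)
  fix j assume j: "j < n"
  have w: "coweight_D p 0 i = (if i \<le> p then 1 else 1/2)"
    "coweight_D p (Suc p) i = (if i \<le> p then real (Suc i) / 2
       else if i = Suc p then (real p + 3) / 4 else (real p + 1) / 4)"
    "coweight_D p (Suc (Suc p)) i = (if i \<le> p then real (Suc i) / 2
       else if i = Suc (Suc p) then (real p + 3) / 4 else (real p + 1) / 4)" for i
    by (simp_all add: coweight_D_def)
  have "Suc (p - 1) = p" using p_pos by simp
  have jc: "j < p \<or> j = p \<or> j = Suc p \<or> j = Suc (Suc p)" using j n_eq by linarith
  from assms consider "r = 0" | "r = Suc p" | "r = Suc (Suc p)" by blast
  then show "lincomb (coweight_D p r) \<bullet> b j = (if j = r then 1 else 0)"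
  proof cases
    case 1
    from jc show ?thesis unfolding inner_basis_D[OF j]
      by (elim disjE; auto simp: 1 w \<open>Suc (p - 1) = p\<close> field_simps)
  next
    case 2
    from jc show ?thesis unfolding inner_basis_D[OF j]
      by (elim disjE; auto simp: 2 w \<open>Suc (p - 1) = p\<close> field_simps)
  next
    case 3
    from jc show ?thesis unfolding inner_basis_D[OF j]
      by (elim disjE; auto simp: 3 w \<open>Suc (p - 1) = p\<close> field_simps)
  qed
qed

lemma chain_cong_D:
  assumes "integral_pairing q" "j \<le> p"
  shows "q j - real (Suc j) * q 0 \<in> \<int>"
proof -
  let ?X = "padded n q"
  have "2 * ?X k - ?X (k - 1) - ?X (Suc k) \<in> \<int>" if "1 \<le> k" "k \<le> p" for k
  proof -
    have "k - 1 < n" using that n_eq by linarith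
    then have "lincomb q \<bullet> b (k - 1) \<in> \<int>" using assms(1) unfolding integral_pairing_def by blast
    moreover have "lincomb q \<bullet> b (k - 1) = 2 * ?X k - ?X (k - 1) - ?X (Suc k)"
      using inner_basis_D[OF \<open>k - 1 < n\<close>] that n_eq by (auto simp: padded_def)
    ultimately show ?thesis by simp
  qed
  then have "?X (Suc j) - of_nat (Suc j) * ?X 1 \<in> \<int>"
    using assms(2) by (intro second_diff_Ints_linear[where L = p]) (simp_all add: padded_def)
  then show ?thesis using assms(2) n_eq by (simp add: padded_def)
qed

lemma Ints_if_end_coeffs_Ints_D:
  assumes "integral_pairing z" "z 0 \<in> \<int>" "z (Suc p) \<in> \<int>" "z (Suc (Suc p)) \<in> \<int>" "i < n"
  shows "z i \<in> \<int>"
proof -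
  consider "i \<le> p" | "i = Suc p" | "i = Suc (Suc p)" using assms(5) n_eq by linarith
  then show ?thesis
  proof cases
    case 1
    have "z i = (z i - real (Suc i) * z 0) + real (Suc i) * z 0" by simp
    also have "\<dots> \<in> \<int>" using chain_cong_D[OF assms(1) 1] assms(2) by (intro Ints_add Ints_mult) auto
    finally show ?thesis .
  qed (use assms in simp_all)
qed

end

lemma D_end_residues_cases_linear:
  fixes A B U M W zp k1 k2 k3 zp1 P :: int
  assumes "A = M + 2*zp + 2*k1" "B = M + 2*zp + 2*k2" "U = 2*k3 + k1 + k2 - 2*zp + 2*zp1"
    and "(2 dvd U \<and> M = 2*W) \<or> (\<not> 2 dvd U \<and> M = 2*W + P + 1)"
  shows "(2 dvd U \<and> 4 dvd A \<and> 4 dvd B) \<or>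
    ((2 dvd U + 2 \<and> 4 dvd A + 2 \<and> 4 dvd B + 2) \<and> \<not> (2 dvd U + 1 \<and> 4 dvd A + P + 3 \<and> 4 dvd B + P + 1)
      \<and> \<not> (2 dvd U + 1 \<and> 4 dvd A + P + 1 \<and> 4 dvd B + P + 3)) \<or>
    (\<not> (2 dvd U + 2 \<and> 4 dvd A + 2 \<and> 4 dvd B + 2) \<and> (2 dvd U + 1 \<and> 4 dvd A + P + 3 \<and> 4 dvd B + P + 1)
      \<and> \<not> (2 dvd U + 1 \<and> 4 dvd A + P + 1 \<and> 4 dvd B + P + 3)) \<or>
    (\<not> (2 dvd U + 2 \<and> 4 dvd A + 2 \<and> 4 dvd B + 2) \<and> \<not> (2 dvd U + 1 \<and> 4 dvd A + P + 3 \<and> 4 dvd B + P + 1)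
      \<and> (2 dvd U + 1 \<and> 4 dvd A + P + 1 \<and> 4 dvd B + P + 3))"
  using assms by presburger

lemma D_end_residues_cases:
  fixes A B U zp k1 k2 k3 zp1 P :: int
  assumes "A = (P+1)*U + 2*zp + 2*k1" "B = (P+1)*U + 2*zp + 2*k2" "U = 2*k3 + k1 + k2 - 2*zp + 2*zp1"
  shows "(2 dvd U \<and> 4 dvd A \<and> 4 dvd B) \<or>
    ((2 dvd U + 2 \<and> 4 dvd A + 2 \<and> 4 dvd B + 2) \<and> \<not> (2 dvd U + 1 \<and> 4 dvd A + P + 3 \<and> 4 dvd B + P + 1)
      \<and> \<not> (2 dvd U + 1 \<and> 4 dvd A + P + 1 \<and> 4 dvd B + P + 3)) \<or>
    (\<not> (2 dvd U + 2 \<and> 4 dvd A + 2 \<and> 4 dvd B + 2) \<and> (2 dvd U + 1 \<and> 4 dvd A + P + 3 \<and> 4 dvd B + P + 1)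
      \<and> \<not> (2 dvd U + 1 \<and> 4 dvd A + P + 1 \<and> 4 dvd B + P + 3)) \<or>
    (\<not> (2 dvd U + 2 \<and> 4 dvd A + 2 \<and> 4 dvd B + 2) \<and> \<not> (2 dvd U + 1 \<and> 4 dvd A + P + 3 \<and> 4 dvd B + P + 1)
      \<and> (2 dvd U + 1 \<and> 4 dvd A + P + 1 \<and> 4 dvd B + P + 3))"
proof (rule D_end_residues_cases_linear[OF assms])
  define V where "V = U div 2"
  show "(2 dvd U \<and> (P+1)*U = 2*((P+1)*V)) \<or> (\<not> 2 dvd U \<and> (P+1)*U = 2*((P+1)*V) + P + 1)"
  proof (cases "2 dvd U")
    case True
    then have "U = 2 * V" unfolding V_def by simp
    then show ?thesis using True by simp
  next
    case False
    then have "U = 2 * V + 1" unfolding V_def by presburger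
    then show ?thesis using False by (simp add: algebra_simps)
  qed
qed

lemma add_of_int_divide_Ints_iff:
  assumes "d * x = (of_int X :: real)" "d = of_int D" "D \<noteq> 0"
  shows "x + of_int s / d \<in> \<int> \<longleftrightarrow> D dvd X + s"
proof
  assume "x + of_int s / d \<in> \<int>"
  then obtain k where k: "x + of_int s / d = of_int k" by (auto elim: Ints_cases)
  have "of_int (X + s) = d * (x + of_int s / d)" using assms by (simp add: field_simps)
  also have "\<dots> = of_int (D * k)" using k assms(2) by simp
  finally show "D dvd X + s" by (simp only: of_int_eq_iff) simp
next
  assume "D dvd X + s"
  then obtain k where k: "X + s = D * k" ..
  have "x + of_int s / d = of_int (X + s) / d" using assms by (simp add: field_simps)
  also have "\<dots> = of_int k" using k assms by simp
  finally show "x + of_int s / d \<in> \<int>" by simp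
qed

lemma D_end_coeffs_scaled:
  fixes u a bb qp qp1 :: real and p :: nat
  assumes "qp - real (Suc p) * u \<in> \<int>" "qp1 - real p * u \<in> \<int>"
    "2 * a - qp \<in> \<int>" "2 * bb - qp \<in> \<int>" "2 * qp - qp1 - a - bb \<in> \<int>"
  obtains U A B zp k1 k2 k3 zp1 :: int
  where "2 * u = of_int U" "4 * a = of_int A" "4 * bb = of_int B"
    "A = (int p + 1) * U + 2*zp + 2*k1" "B = (int p + 1) * U + 2*zp + 2*k2"
    "U = 2*k3 + k1 + k2 - 2*zp + 2*zp1"
proof -
  obtain zp where zp: "qp - real (Suc p) * u = of_int zp" using assms(1) by (elim Ints_cases)
  obtain zp1 where zp1: "qp1 - real p * u = of_int zp1" using assms(2) by (elim Ints_cases)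
  obtain k1 where k1: "2 * a - qp = of_int k1" using assms(3) by (elim Ints_cases)
  obtain k2 where k2: "2 * bb - qp = of_int k2" using assms(4) by (elim Ints_cases)
  obtain k3 where k3: "2 * qp - qp1 - a - bb = of_int k3" using assms(5) by (elim Ints_cases)
  define U where "U = 2*k3 + k1 + k2 - 2*zp + 2*zp1"
  have "of_int U = 2 * of_int k3 + of_int k1 + of_int k2 - 2 * of_int zp + 2 * (of_int zp1 :: real)"
    unfolding U_def by simp
  then have U: "2 * u = of_int U" using zp zp1 k1 k2 k3 by (simp add: algebra_simps)
  then have PU: "of_int ((int p + 1) * U) = 2 * (real (Suc p) * u)" by (simp add: algebra_simps)
  have "4 * a = of_int ((int p + 1) * U) + 2 * of_int zp + 2 * of_int k1" using PU zp k1 by linarith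
  then have a4: "4 * a = of_int ((int p + 1) * U + 2*zp + 2*k1)" by simp
  have "4 * bb = of_int ((int p + 1) * U) + 2 * of_int zp + 2 * of_int k2" using PU zp k2 by linarith
  then have bb4: "4 * bb = of_int ((int p + 1) * U + 2*zp + 2*k2)" by simp
  show ?thesis by (rule that[OF U a4 bb4 refl refl U_def])
qed

lemma D_end_coeffs_cases:
  fixes u a bb qp qp1 :: real and p :: nat
  assumes "qp - real (Suc p) * u \<in> \<int>" "qp1 - real p * u \<in> \<int>"
    "2 * a - qp \<in> \<int>" "2 * bb - qp \<in> \<int>" "2 * qp - qp1 - a - bb \<in> \<int>"
  defines "T0 \<equiv> u + 1 \<in> \<int> \<and> a + 1/2 \<in> \<int> \<and> bb + 1/2 \<in> \<int>"
    and "T1 \<equiv> u + 1/2 \<in> \<int> \<and> a + (real p + 3)/4 \<in> \<int> \<and> bb + (real p + 1)/4 \<in> \<int>"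
    and "T2 \<equiv> u + 1/2 \<in> \<int> \<and> a + (real p + 1)/4 \<in> \<int> \<and> bb + (real p + 3)/4 \<in> \<int>"
  shows "(u \<in> \<int> \<and> a \<in> \<int> \<and> bb \<in> \<int>) \<or> (T0 \<and> \<not> T1 \<and> \<not> T2) \<or> (\<not> T0 \<and> T1 \<and> \<not> T2)
    \<or> (\<not> T0 \<and> \<not> T1 \<and> T2)"
proof -
  obtain U A B zp k1 k2 k3 zp1 where s: "2 * u = of_int U" "4 * a = of_int A" "4 * bb = of_int B"
    and rel: "A = (int p + 1) * U + 2*zp + 2*k1" "B = (int p + 1) * U + 2*zp + 2*k2"
      "U = 2*k3 + k1 + k2 - 2*zp + 2*zp1"
    using D_end_coeffs_scaled[OF assms(1-5)] by blast
  have u: "u + of_int t / 2 \<in> \<int> \<longleftrightarrow> 2 dvd U + t" for t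
    by (rule add_of_int_divide_Ints_iff[OF s(1)]) simp_all
  have a: "a + of_int t / 4 \<in> \<int> \<longleftrightarrow> 4 dvd A + t" for t
    by (rule add_of_int_divide_Ints_iff[OF s(2)]) simp_all
  have bb: "bb + of_int t / 4 \<in> \<int> \<longleftrightarrow> 4 dvd B + t" for t
    by (rule add_of_int_divide_Ints_iff[OF s(3)]) simp_all
  have res: "u \<in> \<int> \<longleftrightarrow> 2 dvd U" "u + 1 \<in> \<int> \<longleftrightarrow> 2 dvd U + 2" "u + 1/2 \<in> \<int> \<longleftrightarrow> 2 dvd U + 1"
    using u[of 0] u[of 2] u[of 1] by simp_all
  have res_a: "a \<in> \<int> \<longleftrightarrow> 4 dvd A" "a + 1/2 \<in> \<int> \<longleftrightarrow> 4 dvd A + 2"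
    "a + (real p + 3)/4 \<in> \<int> \<longleftrightarrow> 4 dvd A + int p + 3" "a + (real p + 1)/4 \<in> \<int> \<longleftrightarrow> 4 dvd A + int p + 1"
    using a[of 0] a[of 2] a[of "int p + 3"] a[of "int p + 1"] by (simp_all add: add.assoc)
  have res_bb: "bb \<in> \<int> \<longleftrightarrow> 4 dvd B" "bb + 1/2 \<in> \<int> \<longleftrightarrow> 4 dvd B + 2"
    "bb + (real p + 3)/4 \<in> \<int> \<longleftrightarrow> 4 dvd B + int p + 3" "bb + (real p + 1)/4 \<in> \<int> \<longleftrightarrow> 4 dvd B + int p + 1"
    using bb[of 0] bb[of 2] bb[of "int p + 3"] bb[of "int p + 1"] by (simp_all add: add.assoc)
  show ?thesis
    unfolding T0_def T1_def T2_def res res_a res_bb by (rule D_end_residues_cases[OF rel])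
qed

context cartan_basis_D
begin

lemma end_coeffs_relations_D:
  assumes q: "integral_pairing q"
  shows "q p - real (Suc p) * q 0 \<in> \<int>" "q (p - 1) - real p * q 0 \<in> \<int>"
    "2 * q (Suc p) - q p \<in> \<int>" "2 * q (Suc (Suc p)) - q p \<in> \<int>"
    "2 * q p - q (p - 1) - q (Suc p) - q (Suc (Suc p)) \<in> \<int>"
proof -
  have pairing: "lincomb q \<bullet> b j \<in> \<int>" if "j < n" for j using q that unfolding integral_pairing_def by blast
  show "2 * q (Suc p) - q p \<in> \<int>" "2 * q (Suc (Suc p)) - q p \<in> \<int>"
    "2 * q p - q (p - 1) - q (Suc p) - q (Suc (Suc p)) \<in> \<int>"
    using pairing[OF end_nodes_less(2)] pairing[OF end_nodes_less(3)] pairing[OF end_nodes_less(1)] p_pos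
    by (simp_all add: inner_basis_D end_nodes_less)
  have "q (p - 1) - real (Suc (p - 1)) * q 0 \<in> \<int>" by (rule chain_cong_D[OF q]) simp
  then show "q p - real (Suc p) * q 0 \<in> \<int>" "q (p - 1) - real p * q 0 \<in> \<int>"
    using chain_cong_D[OF q, of p] p_pos by simp_all
qed

lemma Ints_iff_end_coeffs_Ints_D:
  assumes z: "integral_pairing z"
  shows "(\<forall>i<n. z i \<in> \<int>) \<longleftrightarrow> z 0 \<in> \<int> \<and> z (Suc p) \<in> \<int> \<and> z (Suc (Suc p)) \<in> \<int>"
proof
  assume "\<forall>i<n. z i \<in> \<int>"
  then show "z 0 \<in> \<int> \<and> z (Suc p) \<in> \<int> \<and> z (Suc (Suc p)) \<in> \<int>"
    using end_nodes_less by (metis zero_less_Suc less_trans)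
next
  assume ends: "z 0 \<in> \<int> \<and> z (Suc p) \<in> \<int> \<and> z (Suc (Suc p)) \<in> \<int>"
  show "\<forall>i<n. z i \<in> \<int>"
  proof (intro allI impI)
    fix i assume "i < n"
    from ends show "z i \<in> \<int>" by (intro Ints_if_end_coeffs_Ints_D[OF z _ _ _ \<open>i < n\<close>]) simp_all
  qed
qed

lemma classes_D:
  assumes q: "integral_pairing q"
  shows "(\<forall>i<n. q i \<in> \<int>) \<or> (\<exists>!r. r < n \<and> hcoeffs_D p r = 1 \<and> (\<forall>i<n. q i + coweight_D p r i \<in> \<int>))"
proof -
  define Z where "Z r \<longleftrightarrow> q 0 + coweight_D p r 0 \<in> \<int> \<and> q (Suc p) + coweight_D p r (Suc p) \<in> \<int>
      \<and> q (Suc (Suc p)) + coweight_D p r (Suc (Suc p)) \<in> \<int>" for r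
  have Z: "Z 0 \<longleftrightarrow> q 0 + 1 \<in> \<int> \<and> q (Suc p) + 1/2 \<in> \<int> \<and> q (Suc (Suc p)) + 1/2 \<in> \<int>"
    "Z (Suc p) \<longleftrightarrow> q 0 + 1/2 \<in> \<int> \<and> q (Suc p) + (real p + 3)/4 \<in> \<int>
      \<and> q (Suc (Suc p)) + (real p + 1)/4 \<in> \<int>"
    "Z (Suc (Suc p)) \<longleftrightarrow> q 0 + 1/2 \<in> \<int> \<and> q (Suc p) + (real p + 1)/4 \<in> \<int>
      \<and> q (Suc (Suc p)) + (real p + 3)/4 \<in> \<int>"
    unfolding Z_def coweight_D_def by simp_all
  have "(r < n \<and> hcoeffs_D p r = 1 \<and> (\<forall>i<n. q i + coweight_D p r i \<in> \<int>))
      \<longleftrightarrow> (r = 0 \<or> r = Suc p \<or> r = Suc (Suc p)) \<and> Z r" for r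
  proof (cases "r = 0 \<or> r = Suc p \<or> r = Suc (Suc p)")
    case True
    have "integral_pairing (coweight_D p r)"
      using dual_coeffs_coweight_D[OF True] unfolding dual_coeffs_def integral_pairing_def by simp
    then have "integral_pairing (\<lambda>i. q i + coweight_D p r i)" by (rule integral_pairing_add[OF q])
    from Ints_iff_end_coeffs_Ints_D[OF this] show ?thesis
      using True minuscule_D_iff[of r] unfolding Z_def by blast
  qed (use minuscule_D_iff in blast)
  then have "(\<exists>!r. r < n \<and> hcoeffs_D p r = 1 \<and> (\<forall>i<n. q i + coweight_D p r i \<in> \<int>))
      \<longleftrightarrow> (\<exists>!r. (r = 0 \<or> r = Suc p \<or> r = Suc (Suc p)) \<and> Z r)"
    by simp
  moreover have "(q 0 \<in> \<int> \<and> q (Suc p) \<in> \<int> \<and> q (Suc (Suc p)) \<in> \<int>) \<or> (Z 0 \<and> \<not> Z (Suc p) \<and> \<not> Z (Suc (Suc p)))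
     \<or> (\<not> Z 0 \<and> Z (Suc p) \<and> \<not> Z (Suc (Suc p))) \<or> (\<not> Z 0 \<and> \<not> Z (Suc p) \<and> Z (Suc (Suc p)))"
    unfolding Z by (rule D_end_coeffs_cases[OF end_coeffs_relations_D[OF q]])
  moreover have "0 \<noteq> Suc p" "0 \<noteq> Suc (Suc p)" "Suc p \<noteq> Suc (Suc p)" by simp_all
  ultimately show ?thesis unfolding Ints_iff_end_coeffs_Ints_D[OF q] by (elim disjE) (simp, (rule disjI2, blast)+)
qed

lemma canon_rep_diff_mem_zspan_D:
  assumes "y \<in> dual_lattice (zspan base)"
  shows "canon_rep base (cls base y) - y \<in> zspan base"
proof (rule canon_rep_diff_mem_zspan[OF highest_coeffs_D _ _ classes_D assms])
  show "coweight_D p r i \<in> \<rat>" for r i by (simp add: coweight_D_def)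
  show "dual_coeffs (coweight_D p r) r" if "r < n" "hcoeffs_D p r = 1" for r
    using dual_coeffs_coweight_D minuscule_D_iff that by blast
qed

end

section \<open>Type \<open>E\<close>\<close>

text \<open>The vertices \<open>0, \<dots>, n - 2\<close> of \<open>adjE n\<close> form a chain and \<open>n - 1\<close> is attached to \<open>2\<close>.
  The tables below are the inverse Cartan matrices, the coefficients of the highest root, and
  integers \<open>u\<^sub>i\<close> with \<open>W\<^sub>i\<^sub>j \<equiv> u\<^sub>i u\<^sub>j / N\<close> modulo \<open>\<int>\<close> for the determinant \<open>N = 9 - n\<close>;
  \<open>E\<^sub>8\<close> is unimodular, so there every class is trivial.\<close>

context cartan_basis
begin

lemma canon_rep_diff_mem_zspan_table:
  fixes N :: int and m u :: "nat \<Rightarrow> int" and W :: "nat \<Rightarrow> nat \<Rightarrow> real"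
  assumes inverse: "\<And>i j. i < n \<Longrightarrow> j < n \<Longrightarrow>
        (\<Sum>l<n. W i l * cartan_matrix adj l j) = (if j = i then 1 else 0)"
    and root: "(\<Sum>j<n. of_int (m j) * (\<Sum>i<n. of_int (m i) * cartan_matrix adj i j)) = 2"
    and bound: "\<And>i x. i < n \<Longrightarrow> (of_int x)\<^sup>2 \<le> 2 * W i i \<Longrightarrow> x \<le> m i"
    and W_rat: "\<And>i j. W i j \<in> \<rat>"
    and W_cong: "\<And>i j. i < n \<Longrightarrow> j < n \<Longrightarrow> W i j - of_int (u i * u j) / of_int N \<in> \<int>"
    and N: "N > 0" and iz: "iz < n" "u iz = 1"
    and J_surj: "\<And>t. \<not> N dvd t \<Longrightarrow> \<exists>r<n. m r = 1 \<and> N dvd t + u r"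
    and J_inj: "\<And>r r'. r < n \<Longrightarrow> r' < n \<Longrightarrow> m r = 1 \<Longrightarrow> m r' = 1 \<Longrightarrow> N dvd u r - u r' \<Longrightarrow> r = r'"
    and y: "y \<in> dual_lattice (zspan base)"
  shows "canon_rep base (cls base y) - y \<in> zspan base"
proof -
  have W_dual: "dual_coeffs (W i) i" if "i < n" for i
    using inverse that by (intro dual_coeffs_if_inverse) simp
  have m_root: "intcomb m \<bullet> intcomb m = 2" using root by (simp add: inner_lincomb_cartan)
  have "highest_coeffs m" using W_dual m_root bound by (rule highest_coeffs_if_power2_le)
  then show ?thesis
    by (rule canon_rep_diff_mem_zspan_cyclic[where e = 1, OF _ W_rat W_dual _ N iz J_surj _ y])
      (use W_cong J_inj in simp_all)
qed

end

lemma sum_lessThan_6: "(\<Sum>k<(6::nat). f k) = f 0 + f 1 + f 2 + f 3 + f 4 + f 5"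
  by (simp add: eval_nat_numeral ac_simps)

lemma less_6_iff: "(i::nat) < 6 \<longleftrightarrow> i = 0 \<or> i = 1 \<or> i = 2 \<or> i = 3 \<or> i = 4 \<or> i = 5"
  by presburger

lemma sum_lessThan_7: "(\<Sum>k<(7::nat). f k) = f 0 + f 1 + f 2 + f 3 + f 4 + f 5 + f 6"
  by (simp add: eval_nat_numeral ac_simps)

lemma less_7_iff: "(i::nat) < 7 \<longleftrightarrow> i = 0 \<or> i = 1 \<or> i = 2 \<or> i = 3 \<or> i = 4 \<or> i = 5 \<or> i = 6"
  by presburger

lemma sum_lessThan_8: "(\<Sum>k<(8::nat). f k) = f 0 + f 1 + f 2 + f 3 + f 4 + f 5 + f 6 + f 7"
  by (simp add: eval_nat_numeral ac_simps)

lemma less_8_iff: "(i::nat) < 8 \<longleftrightarrow> i = 0 \<or> i = 1 \<or> i = 2 \<or> i = 3 \<or> i = 4 \<or> i = 5 \<or> i = 6 \<or> i = 7"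
  by presburger

definition inv_cartan_E6 :: "nat \<Rightarrow> nat \<Rightarrow> real" where
  "inv_cartan_E6 i j = (if i < 6 \<and> j < 6 then
     [[4/3, 5/3, 2, 4/3, 2/3, 1], [5/3, 10/3, 4, 8/3, 4/3, 2], [2, 4, 6, 4, 2, 3],
      [4/3, 8/3, 4, 10/3, 5/3, 2], [2/3, 4/3, 2, 5/3, 4/3, 1], [1, 2, 3, 2, 1, 2]] ! i ! j else 0)"

definition hcoeffs_E6 :: "nat \<Rightarrow> int" where "hcoeffs_E6 i = [1, 2, 3, 2, 1, 2] ! i"

definition disc_E6 :: "nat \<Rightarrow> int" where "disc_E6 i = [1, 2, 0, 1, 2, 0] ! i"

definition inv_cartan_E7 :: "nat \<Rightarrow> nat \<Rightarrow> real" where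
  "inv_cartan_E7 i j = (if i < 7 \<and> j < 7 then
     [[2, 3, 4, 3, 2, 1, 2], [3, 6, 8, 6, 4, 2, 4], [4, 8, 12, 9, 6, 3, 6], [3, 6, 9, 15/2, 5, 5/2, 9/2],
      [2, 4, 6, 5, 4, 2, 3], [1, 2, 3, 5/2, 2, 3/2, 3/2], [2, 4, 6, 9/2, 3, 3/2, 7/2]] ! i ! j else 0)"

definition hcoeffs_E7 :: "nat \<Rightarrow> int" where "hcoeffs_E7 i = [2, 3, 4, 3, 2, 1, 2] ! i"

definition disc_E7 :: "nat \<Rightarrow> int" where "disc_E7 i = [0, 0, 0, 1, 0, 1, 1] ! i"

definition inv_cartan_E8 :: "nat \<Rightarrow> nat \<Rightarrow> real" where
  "inv_cartan_E8 i j = (if i < 8 \<and> j < 8 then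
     [[4, 7, 10, 8, 6, 4, 2, 5], [7, 14, 20, 16, 12, 8, 4, 10], [10, 20, 30, 24, 18, 12, 6, 15],
      [8, 16, 24, 20, 15, 10, 5, 12], [6, 12, 18, 15, 12, 8, 4, 9], [4, 8, 12, 10, 8, 6, 3, 6],
      [2, 4, 6, 5, 4, 3, 2, 3], [5, 10, 15, 12, 9, 6, 3, 8]] ! i ! j else 0)"

lemma canon_rep_diff_mem_zspan_E6:
  assumes "cartan_basis b 6 (adjE 6)" "y \<in> dual_lattice (zspan (b ` {..<6}))"
  shows "canon_rep (b ` {..<6}) (cls (b ` {..<6}) y) - y \<in> zspan (b ` {..<6})"
proof (rule cartan_basis.canon_rep_diff_mem_zspan_table[OF assms(1), where W = inv_cartan_E6
      and m = hcoeffs_E6 and u = disc_E6 and N = 3 and iz = 0])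
  show "i < 6 \<Longrightarrow> j < 6 \<Longrightarrow>
      (\<Sum>l<6. inv_cartan_E6 i l * cartan_matrix (adjE 6) l j) = (if j = i then 1 else 0)" for i j
    unfolding less_6_iff
    by (elim disjE) (simp_all add: sum_lessThan_6 inv_cartan_E6_def cartan_matrix_def adjE_def adjA_def)
  show "(\<Sum>j<6. of_int (hcoeffs_E6 j) * (\<Sum>i<6. of_int (hcoeffs_E6 i) * cartan_matrix (adjE 6) i j)) = 2"
    by (simp add: sum_lessThan_6 hcoeffs_E6_def cartan_matrix_def adjE_def adjA_def)
  show "x \<le> hcoeffs_E6 i" if "i < 6" "(of_int x)\<^sup>2 \<le> 2 * inv_cartan_E6 i i" for i x
  proof (rule int_le_if_power2_le[OF that(2)])
    show "2 * inv_cartan_E6 i i < (of_int (hcoeffs_E6 i) + 1)\<^sup>2"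
      using that(1) unfolding less_6_iff by (elim disjE) (simp_all add: inv_cartan_E6_def hcoeffs_E6_def)
    show "0 \<le> hcoeffs_E6 i"
      using that(1) unfolding less_6_iff by (elim disjE) (simp_all add: hcoeffs_E6_def)
  qed
  show "inv_cartan_E6 i j \<in> \<rat>" for i j
  proof (cases "i < 6 \<and> j < 6")
    case True
    then show ?thesis unfolding less_6_iff by (elim conjE disjE) (simp_all add: inv_cartan_E6_def)
  qed (auto simp: inv_cartan_E6_def)
  show "i < 6 \<Longrightarrow> j < 6 \<Longrightarrow> inv_cartan_E6 i j - of_int (disc_E6 i * disc_E6 j) / of_int 3 \<in> \<int>"
    for i j
    unfolding less_6_iff by (elim disjE) (simp_all add: inv_cartan_E6_def disc_E6_def)
  show "\<exists>r<6. hcoeffs_E6 r = 1 \<and> 3 dvd t + disc_E6 r" if "\<not> 3 dvd t" for t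
  proof (cases "3 dvd t + 1")
    case True
    then show ?thesis by (intro exI[of _ 0]) (simp add: hcoeffs_E6_def disc_E6_def)
  next
    case False
    then have "3 dvd t + 2" using that by presburger
    then show ?thesis by (intro exI[of _ 4]) (simp add: hcoeffs_E6_def disc_E6_def)
  qed
  show "r < 6 \<Longrightarrow> r' < 6 \<Longrightarrow> hcoeffs_E6 r = 1 \<Longrightarrow> hcoeffs_E6 r' = 1 \<Longrightarrow>
      3 dvd disc_E6 r - disc_E6 r' \<Longrightarrow> r = r'" for r r'
    unfolding less_6_iff by (elim disjE) (simp_all add: hcoeffs_E6_def disc_E6_def)
qed (simp_all add: assms(2) disc_E6_def)

lemma canon_rep_diff_mem_zspan_E7:
  assumes "cartan_basis b 7 (adjE 7)" "y \<in> dual_lattice (zspan (b ` {..<7}))"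
  shows "canon_rep (b ` {..<7}) (cls (b ` {..<7}) y) - y \<in> zspan (b ` {..<7})"
proof (rule cartan_basis.canon_rep_diff_mem_zspan_table[OF assms(1), where W = inv_cartan_E7
      and m = hcoeffs_E7 and u = disc_E7 and N = 2 and iz = 3])
  show "i < 7 \<Longrightarrow> j < 7 \<Longrightarrow>
      (\<Sum>l<7. inv_cartan_E7 i l * cartan_matrix (adjE 7) l j) = (if j = i then 1 else 0)" for i j
    unfolding less_7_iff
    by (elim disjE) (simp_all add: sum_lessThan_7 inv_cartan_E7_def cartan_matrix_def adjE_def adjA_def)
  show "(\<Sum>j<7. of_int (hcoeffs_E7 j) * (\<Sum>i<7. of_int (hcoeffs_E7 i) * cartan_matrix (adjE 7) i j)) = 2"
    by (simp add: sum_lessThan_7 hcoeffs_E7_def cartan_matrix_def adjE_def adjA_def)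
  show "x \<le> hcoeffs_E7 i" if "i < 7" "(of_int x)\<^sup>2 \<le> 2 * inv_cartan_E7 i i" for i x
  proof (rule int_le_if_power2_le[OF that(2)])
    show "2 * inv_cartan_E7 i i < (of_int (hcoeffs_E7 i) + 1)\<^sup>2"
      using that(1) unfolding less_7_iff by (elim disjE) (simp_all add: inv_cartan_E7_def hcoeffs_E7_def)
    show "0 \<le> hcoeffs_E7 i"
      using that(1) unfolding less_7_iff by (elim disjE) (simp_all add: hcoeffs_E7_def)
  qed
  show "inv_cartan_E7 i j \<in> \<rat>" for i j
  proof (cases "i < 7 \<and> j < 7")
    case True
    then show ?thesis unfolding less_7_iff by (elim conjE disjE) (simp_all add: inv_cartan_E7_def)
  qed (auto simp: inv_cartan_E7_def)
  show "i < 7 \<Longrightarrow> j < 7 \<Longrightarrow> inv_cartan_E7 i j - of_int (disc_E7 i * disc_E7 j) / of_int 2 \<in> \<int>"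
    for i j
    unfolding less_7_iff by (elim disjE) (simp_all add: inv_cartan_E7_def disc_E7_def)
  show "\<exists>r<7. hcoeffs_E7 r = 1 \<and> 2 dvd t + disc_E7 r" if "\<not> 2 dvd t" for t
  proof (intro exI conjI)
    show "(5::nat) < 7" "hcoeffs_E7 5 = 1" by (simp_all add: hcoeffs_E7_def)
    show "2 dvd t + disc_E7 5" using that by (simp add: disc_E7_def)
  qed
  show "r < 7 \<Longrightarrow> r' < 7 \<Longrightarrow> hcoeffs_E7 r = 1 \<Longrightarrow> hcoeffs_E7 r' = 1 \<Longrightarrow>
      2 dvd disc_E7 r - disc_E7 r' \<Longrightarrow> r = r'" for r r'
    unfolding less_7_iff by (elim disjE) (simp_all add: hcoeffs_E7_def)
qed (simp_all add: assms(2) disc_E7_def)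

lemma canon_rep_diff_mem_zspan_E8:
  assumes "cartan_basis b 8 (adjE 8)" "y \<in> dual_lattice (zspan (b ` {..<8}))"
  shows "canon_rep (b ` {..<8}) (cls (b ` {..<8}) y) - y \<in> zspan (b ` {..<8})"
proof -
  interpret cartan_basis b 8 "adjE 8" by (rule assms(1))
  have "i < 8 \<Longrightarrow> j < 8 \<Longrightarrow>
      (\<Sum>l<8. inv_cartan_E8 i l * cartan_matrix (adjE 8) l j) = (if j = i then 1 else 0)" for i j
    unfolding less_8_iff
    by (elim disjE) (simp_all add: sum_lessThan_8 inv_cartan_E8_def cartan_matrix_def adjE_def adjA_def)
  then have W_dual: "dual_coeffs (inv_cartan_E8 i) i" if "i < 8" for i
    using that by (intro dual_coeffs_if_inverse) simp
  have W_int: "i < 8 \<Longrightarrow> j < 8 \<Longrightarrow> inv_cartan_E8 i j \<in> \<int>" for i j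
    unfolding less_8_iff by (elim disjE) (simp_all add: inv_cartan_E8_def)
  show ?thesis
  proof (rule canon_rep_diff_mem_zspan_if_unimodular[OF _ assms(2)])
    fix q assume "integral_pairing q"
    then have "(\<forall>i<8. q i \<in> \<int>) \<or> (\<exists>!r. r \<in> {} \<and> (\<forall>i<8. q i + inv_cartan_E8 r i \<in> \<int>))"
      by (intro classes_cyclic[where e = 1 and u = "\<lambda>_. 1" and N = 1 and iz = 0])
        (simp_all add: W_dual W_int)
    then show "\<forall>i<8. q i \<in> \<int>" by blast
  qed
qed
lemma canon_rep_diff_mem_zspan_E:
  assumes "cartan_basis b k (adjE k)" "k \<in> {6, 7, 8}" "y \<in> dual_lattice (zspan (b ` {..<k}))"
  shows "canon_rep (b ` {..<k}) (cls (b ` {..<k}) y) - y \<in> zspan (b ` {..<k})"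
  using assms canon_rep_diff_mem_zspan_E6[of b y] canon_rep_diff_mem_zspan_E7[of b y]
    canon_rep_diff_mem_zspan_E8[of b y]
  by auto

section \<open>Components of a simple root system\<close>

lemma cartan_basis_of_component:
  assumes f: "bij_betw f C {..<k}"
    and C: "z_indep C" "\<forall>u\<in>C. u \<bullet> u = 2" "\<forall>u\<in>C. \<forall>v\<in>C. u \<noteq> v \<longrightarrow> negform u v \<in> {0, 1}"
    and adj: "\<forall>u\<in>C. \<forall>v\<in>C. dual_edge u v \<longleftrightarrow> A (f u) (f v)"
  shows "cartan_basis (inv_into C f) k A" and "inv_into C f ` {..<k} = C"
proof -
  let ?b = "inv_into C f"
  have img: "?b ` {..<k} = C" using f by (simp add: bij_betw_inv_into bij_betw_imp_surj_on)
  have fb: "f (?b i) = i" if "i < k" for i using f that by (simp add: bij_betw_inv_into_right)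
  have inC: "?b i \<in> C" if "i < k" for i using img that by auto
  show "cartan_basis ?b k A"
  proof
    show "inj_on ?b {..<k}" using f by (metis bij_betw_imp_inj_on bij_betw_inv_into)
    show "z_indep (?b ` {..<k})" using C(1) img by simp
  next
    fix i j assume i: "i < k" and j: "j < k"
    show "?b i \<bullet> ?b j = cartan_matrix A i j"
    proof (cases "i = j")
      case True
      then show ?thesis using C(2) inC[OF i] by (simp add: cartan_matrix_def)
    next
      case False
      then have ne: "?b i \<noteq> ?b j" using fb i j by metis
      have "dual_edge (?b i) (?b j) \<longleftrightarrow> A i j" using adj inC[OF i] inC[OF j] fb[OF i] fb[OF j] by metis
      moreover have "negform (?b i) (?b j) \<in> {0, 1}" using C(3) inC[OF i] inC[OF j] ne by blast
      ultimately show ?thesis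
        using ne False unfolding cartan_matrix_def dual_edge_def negform_def by auto
    qed
  qed
  show "?b ` {..<k} = C" by (rule img)
qed

lemma canon_rep_diff_mem_zspan_component:
  assumes C: "z_indep C" "\<forall>u\<in>C. u \<bullet> u = 2" "\<forall>u\<in>C. \<forall>v\<in>C. u \<noteq> v \<longrightarrow> negform u v \<in> {0, 1}"
    and ADE: "is_ADE C dual_edge" and y: "y \<in> dual_lattice (zspan C)"
  shows "canon_rep C (cls C y) - y \<in> zspan C"
proof -
  obtain f k where f: "bij_betw f C {..<k}" and types:
    "(k \<ge> 1 \<and> (\<forall>u\<in>C. \<forall>v\<in>C. dual_edge u v \<longleftrightarrow> adjA (f u) (f v))) \<or>
     (k \<ge> 4 \<and> (\<forall>u\<in>C. \<forall>v\<in>C. dual_edge u v \<longleftrightarrow> adjD k (f u) (f v))) \<or>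
     (k \<in> {6,7,8} \<and> (\<forall>u\<in>C. \<forall>v\<in>C. dual_edge u v \<longleftrightarrow> adjE k (f u) (f v)))"
    using ADE unfolding is_ADE_def by blast
  note basis = cartan_basis_of_component[OF f C]
  from types show ?thesis
  proof (elim disjE conjE)
    assume "k \<ge> 1" "\<forall>u\<in>C. \<forall>v\<in>C. dual_edge u v \<longleftrightarrow> adjA (f u) (f v)"
    then show ?thesis
      using cartan_basis.canon_rep_diff_mem_zspan_A[OF basis(1) refl] y basis(2) by metis
  next
    assume k: "k \<ge> 4" and adj: "\<forall>u\<in>C. \<forall>v\<in>C. dual_edge u v \<longleftrightarrow> adjD k (f u) (f v)"
    have "cartan_basis_D (inv_into C f) k (k - 3)"
      using basis(1)[OF adj] k by (intro cartan_basis_D.intro) (auto simp: cartan_basis_D_axioms_def)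
    then show ?thesis using cartan_basis_D.canon_rep_diff_mem_zspan_D y basis(2)[OF adj] by metis
  next
    assume "k \<in> {6,7,8}" and adj: "\<forall>u\<in>C. \<forall>v\<in>C. dual_edge u v \<longleftrightarrow> adjE k (f u) (f v)"
    then show ?thesis
      using canon_rep_diff_mem_zspan_E[OF basis(1)[OF adj]] y basis(2)[OF adj] by metis
  qed
qed

lemma canon_rep_diff_mem_zspan_comps:
  assumes Th: "simple_root_system (lroots L) Th" and C: "C \<in> comps Th"
    and y: "y \<in> dual_lattice (zspan C)"
  shows "canon_rep C (cls C y) - y \<in> zspan Th"
proof -
  have "C \<subseteq> Th" using C unfolding comps_def by auto
  have "canon_rep C (cls C y) - y \<in> zspan C"
  proof (rule canon_rep_diff_mem_zspan_component[OF _ _ _ _ y])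
    have Th: "Th \<subseteq> lroots L" "z_indep Th" "\<forall>r\<in>Th. \<forall>r'\<in>Th. r \<noteq> r' \<longrightarrow> negform r r' \<in> {0, 1}"
      "\<forall>C\<in>comps Th. is_ADE C dual_edge"
      using Th unfolding simple_root_system_def by blast+
    show "z_indep C" using Th(2) \<open>C \<subseteq> Th\<close> by (rule z_indep_subset)
    show "\<forall>u\<in>C. u \<bullet> u = 2" using Th(1) \<open>C \<subseteq> Th\<close> by (auto simp: lroots_def negform_def)
    show "\<forall>u\<in>C. \<forall>v\<in>C. u \<noteq> v \<longrightarrow> negform u v \<in> {0, 1}" using Th(3) \<open>C \<subseteq> Th\<close> by blast
    show "is_ADE C dual_edge" using Th(4) C by blast
  qed
  then show ?thesis using zspan_mono[OF \<open>C \<subseteq> Th\<close>] by blast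
qed

lemma niemeier_zspan_subset:
  assumes "niemeier N"
  shows "zspan N \<subseteq> N"
proof -
  obtain B :: "24 \<Rightarrow> vec" where "N = zspan (range B)" using assms unfolding niemeier_def by blast
  then show ?thesis by (simp add: zspan_subset_zspan)
qed

theorem proposition7p4:
  fixes N Th :: "vec set" and x :: vec and d :: "vec set \<Rightarrow> vec"
  assumes "niemeier N" and "has_roots N"
    and "simple_root_system (lroots N) Th"
    and "x \<in> N"
    and "\<forall>C\<in>comps Th. d C \<in> dual_lattice (zspan C)"
    and "x = (\<Sum>C\<in>comps Th. d C)"
  shows "(\<Sum>C\<in>comps Th. canon_rep C (cls C (d C))) \<in> N"
proof -
  have closed: "zspan N \<subseteq> N" using assms(1) by (rule niemeier_zspan_subset)
  have "zspan Th = zspan (lroots N)" using assms(3) unfolding simple_root_system_def by blast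
  also have "\<dots> \<subseteq> zspan N" by (rule zspan_mono) (auto simp: lroots_def)
  finally have "zspan Th \<subseteq> N" using closed by blast
  moreover have "(\<Sum>C\<in>comps Th. canon_rep C (cls C (d C)) - d C) \<in> zspan Th"
  proof (rule zspan_sum)
    show "finite (comps Th)" using assms(3) unfolding simple_root_system_def comps_def by simp
    show "canon_rep C (cls C (d C)) - d C \<in> zspan Th" if "C \<in> comps Th" for C
      using canon_rep_diff_mem_zspan_comps[OF assms(3) that] assms(5) that by blast
  qed
  ultimately have "x + (\<Sum>C\<in>comps Th. canon_rep C (cls C (d C)) - d C) \<in> zspan N"
    using assms(4) by (intro zspan_add zspan_superset) auto
  then have "(\<Sum>C\<in>comps Th. canon_rep C (cls C (d C))) \<in> zspan N"
    unfolding assms(6) sum_subtractf by simp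
  then show ?thesis using closed by blast
qed

end
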